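(* Let $a<a_1<b_1<b$, $\Omega=(a,b)$, $\Omega_1=(a_1,b_1)$, $\Omega_2=(a,a_1)\cup(b_1,b)$. Let $\alpha,\beta,\gamma>0$, $\kappa\ge0$, $h,q\in L^2(\Omega)$, $g\in H^1(\Omega)$. Let $u_0\in H^1(\Omega)$ be the unique minimizer over $H^1(\Omega)$ of $$\mathcal{E}_0[u]=\int_\Omega\Big[\tfrac12(D_0|u'|^2+c_0u^2)-f_0u\Big]dx+\sum_{x\in\{a_1,b_1\}}\Big(\tfrac12\kappa u(x)^2+g(x)u(x)\Big)$$ (the weak solution of the two-sided problem $-u_1''+\gamma u_1=q$ in $\Omega_1$, $-\alpha u_2''+\beta u_2=h$ in $\Omega_2$, $u_1=u_2$ on $\partial\Omega_1$, $-(u_1-\alpha u_2)'n_1=\kappa u_1+g$ on $\partial\Omega_1$, $\alpha u_2'=0$ at $a,b$, with $u_0=u_i$ on $\Omega_i$ and $n_1$ the outward normal of $\Omega_1$). For $\varepsilon\in(0,1)$ let $u_\varepsilon\in H^1(\Omega)$ satisfy $$\int_\Omega\big(D_\varepsilon u_\varepsilon'v'+c_\varepsilon u_\varepsilon v+(\kappa u_\varepsilon+g)|\phi_\varepsilon'|v\big)dx=\int_\Omega f_\varepsilon v\,dx\quad\text{for all }v\in H^1(\Omega).$$ Then for every sequence $\varepsilon_k\searrow0$ there exists a subsequence $\{\varepsilon_{k_j}\}$ such that $u_{\varepsilon_{k_j}}\to u_0$ strongly in $H^1(\Omega)$.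
   Context: $H^1$ functions on an interval are identified with their continuous representatives. $r(x)$ is the signed distance from $x$ to $\{a_1,b_1\}$, positive in $\Omega_1$ and negative outside $[a_1,b_1]$; $\phi_\varepsilon=\tfrac12[1+\tanh(r/\varepsilon)]$. Coefficients: $D_\varepsilon=\alpha+(1-\alpha)\phi_\varepsilon$, $c_\varepsilon=\beta+(\gamma-\beta)\phi_\varepsilon$, $f_\varepsilon=h+(q-h)\phi_\varepsilon$, $D_0=\chi_{\Omega_1}+\alpha\chi_{\Omega_2}$, $c_0=\gamma\chi_{\Omega_1}+\beta\chi_{\Omega_2}$, $f_0=q\chi_{\Omega_1}+h\chi_{\Omega_2}$. *)

theory Defs
  imports "HOL-Analysis.Analysis"
begin

definition L2 :: "real \<Rightarrow> real \<Rightarrow> (real \<Rightarrow> real) \<Rightarrow> bool" where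
  "L2 a b f \<longleftrightarrow> set_borel_measurable lebesgue {a<..<b} f
      \<and> set_integrable lebesgue {a<..<b} (\<lambda>x. (f x)^2)"

definition test_fun :: "real \<Rightarrow> real \<Rightarrow> (real \<Rightarrow> real) \<Rightarrow> bool" where
  "test_fun a b \<phi> \<longleftrightarrow>
     (\<exists>F :: nat \<Rightarrow> real \<Rightarrow> real. F 0 = \<phi> \<and>
        (\<forall>n x. (F n has_real_derivative F (Suc n) x) (at x)))
   \<and> (\<exists>c d. a < c \<and> c \<le> d \<and> d < b \<and> (\<forall>x. x \<notin> {c..d} \<longrightarrow> \<phi> x = 0))"

text \<open>u belongs to H^1(a,b) (identified with its continuous representative on (a,b))
  and du is a weak derivative of u.\<close>
definition H1 :: "real \<Rightarrow> real \<Rightarrow> (real \<Rightarrow> real) \<Rightarrow> (real \<Rightarrow> real) \<Rightarrow> bool" where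
  "H1 a b u du \<longleftrightarrow> L2 a b u \<and> L2 a b du \<and> continuous_on {a<..<b} u \<and>
     (\<forall>\<phi>. test_fun a b \<phi> \<longrightarrow>
        (LINT x:{a<..<b}|lebesgue. u x * deriv \<phi> x) = - (LINT x:{a<..<b}|lebesgue. du x * \<phi> x))"

definition sdist :: "real \<Rightarrow> real \<Rightarrow> real \<Rightarrow> real" where
  "sdist a1 b1 x = (if x \<in> {a1..b1} then min \<bar>x - a1\<bar> \<bar>x - b1\<bar>
                    else - min \<bar>x - a1\<bar> \<bar>x - b1\<bar>)"

definition phi_eps :: "real \<Rightarrow> real \<Rightarrow> real \<Rightarrow> real \<Rightarrow> real" where
  "phi_eps a1 b1 \<epsilon> x = (1 + tanh (sdist a1 b1 x / \<epsilon>)) / 2"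

definition E0 :: "real \<Rightarrow> real \<Rightarrow> real \<Rightarrow> real \<Rightarrow> real \<Rightarrow> real \<Rightarrow> real \<Rightarrow> real
   \<Rightarrow> (real \<Rightarrow> real) \<Rightarrow> (real \<Rightarrow> real) \<Rightarrow> (real \<Rightarrow> real)
   \<Rightarrow> (real \<Rightarrow> real) \<Rightarrow> (real \<Rightarrow> real) \<Rightarrow> real" where
  "E0 a b a1 b1 \<alpha> \<beta> \<gamma> \<kappa> h q g u du =
    (let \<Omega>1 = {a1<..<b1}; \<Omega>2 = {a<..<a1} \<union> {b1<..<b};
         D0 = (\<lambda>x. indicator \<Omega>1 x + \<alpha> * indicator \<Omega>2 x);
         c0 = (\<lambda>x. \<gamma> * indicator \<Omega>1 x + \<beta> * indicator \<Omega>2 x);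
         f0 = (\<lambda>x. q x * indicator \<Omega>1 x + h x * indicator \<Omega>2 x)
     in (LINT x:{a<..<b}|lebesgue. (1/2) * (D0 x * (du x)^2 + c0 x * (u x)^2) - f0 x * u x)
        + (\<Sum>x\<in>{a1, b1}. (1/2) * \<kappa> * (u x)^2 + g x * u x))"

end

theory Submission
  imports Defs "HOL-Computational_Algebra.Polynomial" "HOL-Real_Asymp.Real_Asymp"
begin

(* Write w = u_eps - u_0. Testing the diffuse weak equation and the Euler-Lagrange equation of E_0
   with w and subtracting gives an identity whose left-hand side controls the squared H^1 norm of w
   uniformly in eps. On the right remain integrals of (phi_eps - chi_Omega1)^2 against fixed L^1
   data, which vanish by dominated convergence, and the difference between the integral of
   |phi_eps'| psi w and psi w (a1) + psi w (b1), where psi = kappa u_0 + g. Since |phi_eps'| is an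
   approximate Dirac mass at a1 and b1, and H^1 functions are 1/2-Hoelder with constant bounded by
   their norm, this difference is o(1) times the H^1 norm of w, which Young's inequality absorbs.
   Hence the whole family converges and the subsequence can be taken to be the identity.
   The pointwise facts about H^1 functions rest on the fundamental theorem of calculus for weak
   derivatives, obtained by testing with smoothed indicators of intervals. *)

section \<open>Smooth test functions\<close>

primrec n_times_differentiable :: "nat \<Rightarrow> (real \<Rightarrow> real) \<Rightarrow> bool" where
  "n_times_differentiable 0 f = True"
| "n_times_differentiable (Suc n) f \<longleftrightarrow>
     (\<forall>x. f differentiable (at x)) \<and> n_times_differentiable n (deriv f)"

lemma n_times_differentiable_SucD: "n_times_differentiable (Suc n) f \<Longrightarrow> n_times_differentiable n f"
  by (induction n arbitrary: f) auto

lemma n_times_differentiable_add: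
  "n_times_differentiable n f \<Longrightarrow> n_times_differentiable n g \<Longrightarrow>
   n_times_differentiable n (\<lambda>x. f x + g x)"
proof (induction n arbitrary: f g)
  case (Suc n)
  then have df: "\<And>x. f differentiable (at x)" and dg: "\<And>x. g differentiable (at x)" by auto
  have "deriv (\<lambda>x. f x + g x) = (\<lambda>x. deriv f x + deriv g x)"
    using df dg by (intro ext DERIV_imp_deriv DERIV_add) (auto simp: DERIV_deriv_iff_real_differentiable)
  then show ?case using Suc df dg by auto
qed simp

lemma n_times_differentiable_cmult:
  "n_times_differentiable n f \<Longrightarrow> n_times_differentiable n (\<lambda>x. c * f x)"
proof (induction n arbitrary: f)
  case (Suc n)
  then have df: "\<And>x. f differentiable (at x)" by auto
  have "deriv (\<lambda>x. c * f x) = (\<lambda>x. c * deriv f x)"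
    using df by (intro ext DERIV_imp_deriv DERIV_cmult) (auto simp: DERIV_deriv_iff_real_differentiable)
  then show ?case using Suc df by auto
qed simp

lemma n_times_differentiable_diff:
  "n_times_differentiable n f \<Longrightarrow> n_times_differentiable n g \<Longrightarrow>
   n_times_differentiable n (\<lambda>x. f x - g x)"
  using n_times_differentiable_add[of n f "\<lambda>x. (-1) * g x"]
    n_times_differentiable_cmult[of n g "-1"] by simp

lemma n_times_differentiable_mult:
  "n_times_differentiable n f \<Longrightarrow> n_times_differentiable n g \<Longrightarrow>
   n_times_differentiable n (\<lambda>x. f x * g x)"
proof (induction n arbitrary: f g)
  case (Suc n)
  then have df: "\<And>x. f differentiable (at x)" and dg: "\<And>x. g differentiable (at x)" by auto
  have "deriv (\<lambda>x. f x * g x) = (\<lambda>x. deriv f x * g x + f x * deriv g x)"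
  proof (intro ext DERIV_imp_deriv)
    fix x
    have "(f has_real_derivative deriv f x) (at x)" "(g has_real_derivative deriv g x) (at x)"
      using df dg by (auto simp: DERIV_deriv_iff_real_differentiable)
    from DERIV_mult[OF this]
    show "((\<lambda>x. f x * g x) has_real_derivative deriv f x * g x + f x * deriv g x) (at x)"
      by (simp add: algebra_simps)
  qed
  moreover have "n_times_differentiable n (\<lambda>x. deriv f x * g x + f x * deriv g x)"
    using Suc n_times_differentiable_SucD[OF Suc.prems(1)] n_times_differentiable_SucD[OF Suc.prems(2)]
    by (intro n_times_differentiable_add) auto
  ultimately show ?case using df dg by (simp add: differentiable_mult)
qed simp

lemma n_times_differentiable_inverse:
  "n_times_differentiable n f \<Longrightarrow> (\<And>x. f x \<noteq> 0) \<Longrightarrow> n_times_differentiable n (\<lambda>x. 1 / f x)"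
proof (induction n arbitrary: f)
  case (Suc n)
  then have df: "\<And>x. f differentiable (at x)" by auto
  have D: "((\<lambda>x. 1 / f x) has_real_derivative - deriv f x * (1 / f x) * (1 / f x)) (at x)" for x
    using df[of x] Suc.prems(2)[of x]
    by (auto intro!: derivative_eq_intros
        simp: DERIV_deriv_iff_real_differentiable[symmetric] power2_eq_square field_simps)
  then have "deriv (\<lambda>x. 1 / f x) = (\<lambda>x. - deriv f x * (1 / f x) * (1 / f x))"
    by (intro ext DERIV_imp_deriv)
  moreover have "n_times_differentiable n (\<lambda>x. - deriv f x * (1 / f x) * (1 / f x))"
    using Suc n_times_differentiable_SucD[OF Suc.prems(1)]
    by (intro n_times_differentiable_mult)
       (auto intro: n_times_differentiable_cmult[of n _ "-1", simplified])
  moreover have "(\<lambda>x. 1 / f x) differentiable (at x)" for x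
    using D real_differentiable_def by blast
  ultimately show ?case by simp
qed simp

lemma n_times_differentiable_affine:
  "n_times_differentiable n f \<Longrightarrow> n_times_differentiable n (\<lambda>x. f (c * x + d))"
proof (induction n arbitrary: f)
  case (Suc n)
  then have df: "\<And>x. f differentiable (at x)" by auto
  have D: "((\<lambda>x. f (c * x + d)) has_real_derivative c * deriv f (c * x + d)) (at x)" for x
  proof -
    have "(f has_real_derivative deriv f (c * x + d)) (at (c * x + d))"
      using df DERIV_deriv_iff_real_differentiable by blast
    moreover have "((\<lambda>x. c * x + d) has_real_derivative c) (at x)"
      by (auto intro!: derivative_eq_intros)
    ultimately show ?thesis using DERIV_chain2 by (fastforce simp: mult.commute)
  qed
  then have "deriv (\<lambda>x. f (c * x + d)) = (\<lambda>x. c * deriv f (c * x + d))"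
    by (intro ext DERIV_imp_deriv)
  moreover have "n_times_differentiable n (\<lambda>x. c * deriv f (c * x + d))"
    using Suc by (intro n_times_differentiable_cmult) auto
  moreover have "(\<lambda>x. f (c * x + d)) differentiable (at x)" for x
    using D real_differentiable_def by blast
  ultimately show ?case by simp
qed simp

lemma n_times_differentiable_higher_deriv:
  "n_times_differentiable (Suc n) f \<Longrightarrow> (deriv ^^ n) f differentiable (at x)"
proof (induction n arbitrary: f)
  case (Suc n)
  have "(deriv ^^ Suc n) f = (deriv ^^ n) (deriv f)"
    by (simp add: funpow_Suc_right del: funpow.simps)
  then show ?case using Suc by simp
qed simp

lemma test_funI:
  assumes "\<And>n. n_times_differentiable n \<phi>" and "a < c" "c \<le> d" "d < b"
    and "\<And>x. x \<notin> {c..d} \<Longrightarrow> \<phi> x = 0"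
  shows "test_fun a b \<phi>"
  unfolding test_fun_def
proof (intro conjI exI[of _ "\<lambda>n. (deriv ^^ n) \<phi>"] allI)
  fix n x
  have "(deriv ^^ n) \<phi> differentiable (at x)"
    using assms(1) n_times_differentiable_higher_deriv by blast
  then show "((deriv ^^ n) \<phi> has_real_derivative (deriv ^^ Suc n) \<phi> x) (at x)"
    by (simp add: DERIV_deriv_iff_real_differentiable)
qed (use assms in auto)

lemma test_fun_continuous:
  assumes "test_fun a b \<phi>"
  shows "continuous_on UNIV \<phi>" "continuous_on UNIV (deriv \<phi>)"
proof -
  obtain F where F: "F 0 = \<phi>" "\<And>n x. (F n has_real_derivative F (Suc n) x) (at x)"
    using assms unfolding test_fun_def by blast
  have "deriv \<phi> = F 1" using F by (intro ext DERIV_imp_deriv) auto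
  then show "continuous_on UNIV \<phi>" "continuous_on UNIV (deriv \<phi>)"
    using F by (metis DERIV_isCont continuous_at_imp_continuous_on One_nat_def)+
qed

definition expinv_poly :: "real poly \<Rightarrow> real \<Rightarrow> real" where
  "expinv_poly p t = (if t > 0 then poly p (1 / t) * exp (- 1 / t) else 0)"

text \<open>For \<open>t > 0\<close>: \<open>d/dt (p(1/t) exp(-1/t)) = (p - p')(1/t) exp(-1/t) / t\<^sup>2\<close>.\<close>
definition expinv_poly_deriv :: "real poly \<Rightarrow> real poly" where
  "expinv_poly_deriv p = [:0, 0, 1:] * (p - pderiv p)"

lemma poly_times_exp_neg_tendsto_0: "((\<lambda>s. poly (p :: real poly) s * exp (- s)) \<longlongrightarrow> 0) at_top"
proof -
  have "((\<lambda>s. \<Sum>i\<le>degree p. coeff p i * (s ^ i / exp s)) \<longlongrightarrow> (\<Sum>i\<le>degree p. coeff p i * 0)) at_top"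
    by (intro tendsto_sum tendsto_mult tendsto_const tendsto_power_div_exp_0)
  moreover have "(\<Sum>i\<le>degree p. coeff p i * (s ^ i / exp s)) = poly p s * exp (- s)" for s
    by (simp add: poly_altdef sum_distrib_left exp_minus divide_inverse mult_ac)
  ultimately show ?thesis by simp
qed

lemma expinv_poly_has_derivative_at_0: "(expinv_poly p has_real_derivative 0) (at 0)"
proof -
  have "((\<lambda>s. poly (p * [:0, 1:]) s * exp (- s)) \<longlongrightarrow> 0) at_top"
    by (rule poly_times_exp_neg_tendsto_0)
  then have "((\<lambda>h. poly (p * [:0, 1:]) (inverse h) * exp (- inverse h)) \<longlongrightarrow> 0) (at_right 0)"
    by (subst filterlim_at_right_to_top) (simp add: mult_ac)
  then have right: "((\<lambda>h. (expinv_poly p h - expinv_poly p 0) / (h - 0)) \<longlongrightarrow> 0) (at_right 0)"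
    by (rule Lim_transform_eventually)
       (auto simp: expinv_poly_def divide_inverse mult_ac
         intro!: eventually_mono[OF eventually_at_right_less])
  have "\<forall>\<^sub>F h in at_left (0::real). (expinv_poly p h - expinv_poly p 0) / (h - 0) = 0"
    using eventually_at_left_real[of "-1" 0] by (rule eventually_mono) (auto simp: expinv_poly_def)
  then have left: "((\<lambda>h. (expinv_poly p h - expinv_poly p 0) / (h - 0)) \<longlongrightarrow> 0) (at_left 0)"
    by (rule tendsto_eventually)
  show ?thesis
    using right left by (simp add: has_field_derivative_iff filterlim_at_split)
qed

lemma expinv_poly_has_derivative:
  "(expinv_poly p has_real_derivative expinv_poly (expinv_poly_deriv p) t) (at t)"
proof -
  consider "t > 0" | "t < 0" | "t = 0" by linarith
  then show ?thesis
  proof cases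
    case 1
    have "((\<lambda>x. poly p (1 / x) * exp (- 1 / x)) has_real_derivative
        expinv_poly (expinv_poly_deriv p) t) (at t)"
      using 1
      by (auto intro!: derivative_eq_intros simp: expinv_poly_def expinv_poly_deriv_def poly_pCons
          algebra_simps power2_eq_square divide_simps)
    then show ?thesis
      by (rule has_field_derivative_transform_within_open[where S="{0<..}"])
         (use 1 in \<open>auto simp: expinv_poly_def\<close>)
  next
    case 2
    have "((\<lambda>x. 0) has_real_derivative expinv_poly (expinv_poly_deriv p) t) (at t)"
      using 2 by (simp add: expinv_poly_def)
    then show ?thesis
      by (rule has_field_derivative_transform_within_open[where S="{..<0}"])
         (use 2 in \<open>auto simp: expinv_poly_def\<close>)
  next
    case 3
    then show ?thesis using expinv_poly_has_derivative_at_0 by (simp add: expinv_poly_def)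
  qed
qed

lemma n_times_differentiable_expinv_poly: "n_times_differentiable n (expinv_poly p)"
proof (induction n arbitrary: p)
  case (Suc n)
  have "deriv (expinv_poly p) = expinv_poly (expinv_poly_deriv p)"
    by (intro ext DERIV_imp_deriv expinv_poly_has_derivative)
  then show ?case
    using Suc expinv_poly_has_derivative real_differentiable_def by auto
qed simp

definition smooth_step :: "real \<Rightarrow> real" where
  "smooth_step t = expinv_poly 1 t / (expinv_poly 1 t + expinv_poly 1 (1 - t))"

lemma expinv_poly_one: "expinv_poly 1 t = (if t > 0 then exp (- 1 / t) else 0)"
  by (simp add: expinv_poly_def)

lemma smooth_step_denominator_pos: "expinv_poly 1 t + expinv_poly 1 (1 - t) > 0"
  by (auto simp: expinv_poly_one add_pos_nonneg add_nonneg_pos)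

lemma n_times_differentiable_smooth_step: "n_times_differentiable n smooth_step"
proof -
  have E: "n_times_differentiable n (expinv_poly 1)" by (rule n_times_differentiable_expinv_poly)
  then have "n_times_differentiable n (\<lambda>t. expinv_poly 1 t + expinv_poly 1 ((-1) * t + 1))"
    by (intro n_times_differentiable_add n_times_differentiable_affine)
  then have "n_times_differentiable n (\<lambda>t. 1 / (expinv_poly 1 t + expinv_poly 1 (1 - t)))"
    by (intro n_times_differentiable_inverse)
       (auto simp: smooth_step_denominator_pos[THEN less_imp_neq, THEN not_sym])
  then have "n_times_differentiable n
      (\<lambda>t. expinv_poly 1 t * (1 / (expinv_poly 1 t + expinv_poly 1 (1 - t))))"
    by (rule n_times_differentiable_mult[OF E])
  then show ?thesis by (simp add: smooth_step_def[abs_def])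
qed

lemma smooth_step_eq_0: "t \<le> 0 \<Longrightarrow> smooth_step t = 0"
  by (simp add: smooth_step_def expinv_poly_one)

lemma smooth_step_eq_1: "t \<ge> 1 \<Longrightarrow> smooth_step t = 1"
  using smooth_step_denominator_pos[of t] by (simp add: smooth_step_def expinv_poly_one)

lemma smooth_step_bounds: "0 \<le> smooth_step t" "smooth_step t \<le> 1"
  using smooth_step_denominator_pos[of t] by (auto simp: smooth_step_def expinv_poly_one divide_simps)

lemma smooth_step_has_derivative: "(smooth_step has_real_derivative deriv smooth_step x) (at x)"
  using n_times_differentiable_smooth_step[of 1] DERIV_deriv_iff_real_differentiable by auto

lemma continuous_on_smooth_step: "continuous_on A smooth_step"
  using smooth_step_has_derivative
  by (meson DERIV_isCont continuous_at_imp_continuous_on)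

lemma continuous_on_deriv_smooth_step: "continuous_on A (deriv smooth_step)"
proof -
  have "deriv smooth_step differentiable (at x)" for x
    using n_times_differentiable_smooth_step[of 2] by (simp add: numeral_2_eq_2)
  then show ?thesis
    by (meson continuous_at_imp_continuous_on differentiable_imp_continuous_within)
qed

lemma deriv_smooth_step_eq_0: "t \<le> 0 \<or> t \<ge> 1 \<Longrightarrow> deriv smooth_step t = 0"
  using DERIV_local_min[OF smooth_step_has_derivative, of 1 t]
    DERIV_local_max[OF smooth_step_has_derivative, of 1 t]
    smooth_step_eq_0 smooth_step_eq_1 smooth_step_bounds by auto

lemma deriv_smooth_step_bounded: obtains M where "M > 0" "\<And>s. \<bar>deriv smooth_step s\<bar> \<le> M"
proof -
  have "compact (deriv smooth_step ` {0..1})"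
    by (intro compact_continuous_image continuous_on_deriv_smooth_step compact_Icc)
  then obtain M where M: "M > 0" "\<And>y. y \<in> deriv smooth_step ` {0..1} \<Longrightarrow> norm y \<le> M"
    using compact_imp_bounded bounded_pos by metis
  have "\<bar>deriv smooth_step s\<bar> \<le> M" for s
    using M deriv_smooth_step_eq_0[of s] by (cases "s \<in> {0..1}") auto
  then show ?thesis using M that by blast
qed

section \<open>Square-integrable functions and \<open>H\<^sup>1\<close> on an interval\<close>

lemma set_borel_measurable_mult:
  fixes f g :: "real \<Rightarrow> real"
  assumes "set_borel_measurable M A f" "set_borel_measurable M A g"
  shows "set_borel_measurable M A (\<lambda>x. f x * g x)"
proof -
  have "(\<lambda>x. indicator A x *\<^sub>R (f x * g x)) = (\<lambda>x. (indicator A x *\<^sub>R f x) * (indicator A x *\<^sub>R g x))"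
    by (auto simp: indicator_def)
  then show ?thesis using assms unfolding set_borel_measurable_def by simp
qed

lemma set_borel_measurable_add:
  fixes f g :: "real \<Rightarrow> real"
  assumes "set_borel_measurable M A f" "set_borel_measurable M A g"
  shows "set_borel_measurable M A (\<lambda>x. f x + g x)"
proof -
  have "(\<lambda>x. indicator A x *\<^sub>R (f x + g x)) = (\<lambda>x. (indicator A x *\<^sub>R f x) + (indicator A x *\<^sub>R g x))"
    by (auto simp: indicator_def)
  then show ?thesis using assms unfolding set_borel_measurable_def by simp
qed

lemma set_borel_measurable_lebesgueI:
  assumes "(g :: real \<Rightarrow> real) \<in> borel_measurable borel" "A \<in> sets lebesgue"
  shows "set_borel_measurable lebesgue A g"
proof -
  have "g \<in> borel_measurable lebesgue" by (rule measurable_completion) (simp add: assms(1))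
  then show ?thesis
    unfolding set_borel_measurable_def using assms(2)
    by (intro borel_measurable_scaleR borel_measurable_indicator) auto
qed

lemma L2_integrable_mult:
  assumes "L2 a b f" "L2 a b g"
  shows "set_integrable lebesgue {a<..<b} (\<lambda>x. f x * g x)"
proof (rule set_integrable_bound[where f="\<lambda>x. (f x)^2 + (g x)^2"])
  show "set_integrable lebesgue {a<..<b} (\<lambda>x. (f x)\<^sup>2 + (g x)\<^sup>2)"
    using assms by (intro set_integral_add) (auto simp: L2_def)
  show "set_borel_measurable lebesgue {a<..<b} (\<lambda>x. f x * g x)"
    using assms by (intro set_borel_measurable_mult) (auto simp: L2_def)
  have "\<bar>f x * g x\<bar> \<le> (f x)^2 + (g x)^2" for x
  proof -
    have "2 * (\<bar>f x\<bar> * \<bar>g x\<bar>) \<le> (f x)^2 + (g x)^2"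
      using sum_squares_bound[of "\<bar>f x\<bar>" "\<bar>g x\<bar>"] by simp
    moreover have "0 \<le> \<bar>f x\<bar> * \<bar>g x\<bar>" by simp
    ultimately show ?thesis unfolding abs_mult by linarith
  qed
  then show "AE x\<in>{a<..<b} in lebesgue. norm (f x * g x) \<le> norm ((f x)\<^sup>2 + (g x)\<^sup>2)"
    by auto
qed

lemma L2_continuous_on:
  assumes "continuous_on {a..b} f"
  shows "L2 a b f"
proof -
  have "set_integrable lebesgue {a..b} (\<lambda>x. (f x)^2)"
    using assms by (intro absolutely_integrable_continuous_real continuous_intros)
  then have sq: "set_integrable lebesgue {a<..<b} (\<lambda>x. (f x)^2)"
    by (rule set_integrable_subset) auto
  have "set_integrable lebesgue {a..b} f" using assms by (rule absolutely_integrable_continuous_real)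
  then have "set_integrable lebesgue {a<..<b} f" by (rule set_integrable_subset) auto
  then show ?thesis
    using sq unfolding L2_def set_integrable_def set_borel_measurable_def by auto
qed

lemma L2_const: "L2 a b (\<lambda>x. c)"
  by (rule L2_continuous_on) simp

lemma L2_integrable: "L2 a b f \<Longrightarrow> set_integrable lebesgue {a<..<b} f"
  using L2_integrable_mult[of a b f "\<lambda>x. 1"] L2_const by simp

lemma L2_mult_bounded:
  assumes "L2 a b f" "set_borel_measurable lebesgue {a<..<b} g"
    and "\<And>x. x \<in> {a<..<b} \<Longrightarrow> \<bar>g x\<bar> \<le> B"
  shows "L2 a b (\<lambda>x. g x * f x)"
proof -
  have m: "set_borel_measurable lebesgue {a<..<b} (\<lambda>x. g x * f x)"
    using assms(1,2) by (intro set_borel_measurable_mult) (auto simp: L2_def)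
  have "set_integrable lebesgue {a<..<b} (\<lambda>x. (g x * f x)^2)"
  proof (rule set_integrable_bound[where f="\<lambda>x. B^2 * (f x)^2"])
    show "set_integrable lebesgue {a<..<b} (\<lambda>x. B\<^sup>2 * (f x)\<^sup>2)"
      using assms(1) by (intro set_integrable_mult_right) (auto simp: L2_def)
    show "set_borel_measurable lebesgue {a<..<b} (\<lambda>x. (g x * f x)\<^sup>2)"
      unfolding power2_eq_square using set_borel_measurable_mult[OF m m] .
    have "norm ((g x * f x)\<^sup>2) \<le> norm (B\<^sup>2 * (f x)\<^sup>2)" if "x \<in> {a<..<b}" for x
    proof -
      have "\<bar>g x\<bar>^2 \<le> B^2" using assms(3)[OF that] by (intro power_mono) auto
      then show ?thesis by (simp add: power_mult_distrib mult_right_mono)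
    qed
    then show "AE x\<in>{a<..<b} in lebesgue. norm ((g x * f x)\<^sup>2) \<le> norm (B\<^sup>2 * (f x)\<^sup>2)"
      by auto
  qed
  then show ?thesis using m unfolding L2_def by blast
qed

lemma L2_mult_bounded_borel:
  assumes "L2 a b f" "g \<in> borel_measurable borel" "\<And>x. x \<in> {a<..<b} \<Longrightarrow> \<bar>g x\<bar> \<le> B"
  shows "L2 a b (\<lambda>x. g x * f x)"
  using assms by (intro L2_mult_bounded set_borel_measurable_lebesgueI) auto

lemma L2_cmult: "L2 a b f \<Longrightarrow> L2 a b (\<lambda>x. c * f x)"
  by (rule L2_mult_bounded_borel[where B="\<bar>c\<bar>"]) auto

lemma L2_add:
  assumes "L2 a b f" "L2 a b g"
  shows "L2 a b (\<lambda>x. f x + g x)"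
proof -
  have "set_integrable lebesgue {a<..<b} (\<lambda>x. (f x)^2 + 2 * (f x * g x) + (g x)^2)"
    using assms
    by (intro set_integral_add set_integrable_mult_right L2_integrable_mult) (auto simp: L2_def)
  moreover have "(\<lambda>x. (f x)^2 + 2 * (f x * g x) + (g x)^2) = (\<lambda>x. (f x + g x)^2)"
    by (auto simp: power2_eq_square algebra_simps)
  ultimately show ?thesis
    using assms unfolding L2_def by (auto intro: set_borel_measurable_add)
qed

lemma L2_diff: "L2 a b f \<Longrightarrow> L2 a b g \<Longrightarrow> L2 a b (\<lambda>x. f x - g x)"
  using L2_add[of a b f "\<lambda>x. (-1) * g x"] L2_cmult[of a b g "-1"] by simp

lemma L2_integrable_weighted_mult:
  assumes "L2 a b f" "L2 a b g" "D \<in> borel_measurable borel" "\<And>x. x \<in> {a<..<b} \<Longrightarrow> \<bar>D x\<bar> \<le> B"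
  shows "set_integrable lebesgue {a<..<b} (\<lambda>x. D x * f x * g x)"
  using L2_integrable_mult[OF L2_mult_bounded_borel[OF assms(1,3,4)] assms(2)] by simp

lemma L2_integrable_weighted_square:
  assumes "L2 a b f" "D \<in> borel_measurable borel" "\<And>x. x \<in> {a<..<b} \<Longrightarrow> \<bar>D x\<bar> \<le> B"
  shows "set_integrable lebesgue {a<..<b} (\<lambda>x. D x * (f x)^2)"
  using L2_integrable_weighted_mult[OF assms(1,1,2,3)] by (simp add: power2_eq_square mult.assoc)

lemma set_integral_square_nonneg: "0 \<le> (LINT t:A|lebesgue. (f t)^2 :: real)"
  unfolding set_lebesgue_integral_def by (rule integral_nonneg_AE) (simp add: indicator_def)

lemma H1_add_scaled:
  assumes "H1 a b v dv" "H1 a b z dz"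
  shows "H1 a b (\<lambda>x. v x + t * z x) (\<lambda>x. dv x + t * dz x)"
  unfolding H1_def
proof (intro conjI allI impI)
  have L: "L2 a b v" "L2 a b z" "L2 a b dv" "L2 a b dz" using assms by (auto simp: H1_def)
  then show "L2 a b (\<lambda>x. v x + t * z x)" "L2 a b (\<lambda>x. dv x + t * dz x)"
    by (auto intro!: L2_add L2_cmult)
  show "continuous_on {a<..<b} (\<lambda>x. v x + t * z x)"
    using assms by (auto simp: H1_def intro!: continuous_intros)
  fix \<phi> assume tf: "test_fun a b \<phi>"
  have L2\<phi>: "L2 a b \<phi>" "L2 a b (deriv \<phi>)"
    using test_fun_continuous[OF tf] by (auto intro!: L2_continuous_on intro: continuous_on_subset)
  have i1: "set_integrable lebesgue {a<..<b} (\<lambda>x. v x * deriv \<phi> x)"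
    "set_integrable lebesgue {a<..<b} (\<lambda>x. t * (z x * deriv \<phi> x))"
    "set_integrable lebesgue {a<..<b} (\<lambda>x. dv x * \<phi> x)"
    "set_integrable lebesgue {a<..<b} (\<lambda>x. t * (dz x * \<phi> x))"
    using L L2\<phi> by (auto intro!: set_integrable_mult_right L2_integrable_mult)
  have e1: "(\<lambda>x. (v x + t * z x) * deriv \<phi> x) = (\<lambda>x. v x * deriv \<phi> x + t * (z x * deriv \<phi> x))"
    "(\<lambda>x. (dv x + t * dz x) * \<phi> x) = (\<lambda>x. dv x * \<phi> x + t * (dz x * \<phi> x))"
    by (auto simp: algebra_simps)
  have weak: "(LINT x:{a<..<b}|lebesgue. v x * deriv \<phi> x) = - (LINT x:{a<..<b}|lebesgue. dv x * \<phi> x)"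
    "(LINT x:{a<..<b}|lebesgue. z x * deriv \<phi> x) = - (LINT x:{a<..<b}|lebesgue. dz x * \<phi> x)"
    using assms tf unfolding H1_def by blast+
  show "(LINT x:{a<..<b}|lebesgue. (v x + t * z x) * deriv \<phi> x)
      = - (LINT x:{a<..<b}|lebesgue. (dv x + t * dz x) * \<phi> x)"
    unfolding e1 set_integral_add(2)[OF i1(1,2)] set_integral_add(2)[OF i1(3,4)]
      set_integral_mult_right weak by simp
qed

definition step_kernel :: "real \<Rightarrow> real \<Rightarrow> real \<Rightarrow> real" where
  "step_kernel \<delta> z t = deriv smooth_step ((t - z) / \<delta>) / \<delta>"

lemma smooth_step_scaled_has_derivative:
  assumes "\<delta> > 0"
  shows "((\<lambda>t. smooth_step ((t - z) / \<delta>)) has_real_derivative step_kernel \<delta> z t) (at t)"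
proof -
  have "((\<lambda>t. (t - z) / \<delta>) has_real_derivative 1 / \<delta>) (at t)"
    using assms by (auto intro!: derivative_eq_intros)
  from DERIV_chain2[OF smooth_step_has_derivative this] show ?thesis
    by (simp add: step_kernel_def)
qed

lemma continuous_on_step_kernel: "\<delta> > 0 \<Longrightarrow> continuous_on A (step_kernel \<delta> z)"
  unfolding step_kernel_def[abs_def]
  by (intro continuous_intros continuous_on_compose2[OF continuous_on_deriv_smooth_step]) auto

lemma step_kernel_eq_0: "\<delta> > 0 \<Longrightarrow> t \<notin> {z..z + \<delta>} \<Longrightarrow> step_kernel \<delta> z t = 0"
  by (auto simp: step_kernel_def deriv_smooth_step_eq_0 divide_simps)

lemma integral_step_kernel:
  assumes "\<delta> > 0"
  shows "integral {z..z + \<delta>} (step_kernel \<delta> z) = 1"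
proof -
  have "(step_kernel \<delta> z has_integral
      smooth_step ((z + \<delta> - z) / \<delta>) - smooth_step ((z - z) / \<delta>)) {z..z + \<delta>}"
    using assms
    by (intro fundamental_theorem_of_calculus)
       (auto intro!: DERIV_subset[OF smooth_step_scaled_has_derivative,
           unfolded has_real_derivative_iff_has_vector_derivative])
  then show ?thesis
    using assms by (simp add: smooth_step_eq_0 smooth_step_eq_1 integral_unique)
qed

lemma set_integral_step_kernel:
  assumes "continuous_on {a<..<b} v" "a < z" "\<delta> > 0" "z + \<delta> < b"
  shows "(LINT t:{a<..<b}|lebesgue. v t * step_kernel \<delta> z t)
      = integral {z..z + \<delta>} (\<lambda>t. v t * step_kernel \<delta> z t)"
proof -
  let ?F = "\<lambda>t. v t * step_kernel \<delta> z t"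
  have "indicator {a<..<b} t *\<^sub>R ?F t = indicator {z..z + \<delta>} t *\<^sub>R ?F t" for t
    using assms step_kernel_eq_0[of \<delta> t z] by (cases "t \<in> {z..z + \<delta>}") (auto simp: indicator_def)
  then have "(LINT t:{a<..<b}|lebesgue. ?F t) = (LINT t:{z..z + \<delta>}|lebesgue. ?F t)"
    unfolding set_lebesgue_integral_def by presburger
  also have "\<dots> = integral {z..z + \<delta>} ?F"
  proof (intro set_lebesgue_integral_eq_integral(2) absolutely_integrable_continuous_real
      continuous_on_mult continuous_on_step_kernel)
    show "continuous_on {z..z + \<delta>} v"
      using assms(1) by (rule continuous_on_subset) (use assms in auto)
  qed (use assms in auto)
  finally show ?thesis .
qed

lemma step_kernel_integral_approx:
  assumes cont: "continuous_on {a<..<b} v" and "a < z" "\<delta> > 0" "z + \<delta> < b"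
    and M: "\<And>s. \<bar>deriv smooth_step s\<bar> \<le> M"
    and osc: "\<And>t. t \<in> {z..z + \<delta>} \<Longrightarrow> \<bar>v t - v z\<bar> \<le> \<eta>"
  shows "\<bar>(LINT t:{a<..<b}|lebesgue. v t * step_kernel \<delta> z t) - v z\<bar> \<le> \<eta> * M"
proof -
  let ?K = "step_kernel \<delta> z"
  have cv: "continuous_on {z..z + \<delta>} v"
    using cont by (rule continuous_on_subset) (use assms in auto)
  have int: "(\<lambda>t. f t * ?K t) integrable_on {z..z + \<delta>}" if "continuous_on {z..z + \<delta>} f" for f
    using that assms(3) by (intro integrable_continuous_real continuous_on_mult continuous_on_step_kernel)
  have "(LINT t:{a<..<b}|lebesgue. v t * ?K t) - v z
      = integral {z..z + \<delta>} (\<lambda>t. v t * ?K t) - integral {z..z + \<delta>} (\<lambda>t. v z * ?K t)"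
    using set_integral_step_kernel[OF assms(1-4)] integral_step_kernel[OF assms(3), of z] by simp
  also have "\<dots> = integral {z..z + \<delta>} (\<lambda>t. (v t - v z) * ?K t)"
    using int[OF cv] int[of "\<lambda>_. v z"]
    by (subst integral_diff[symmetric]) (auto simp: left_diff_distrib)
  finally have eq: "(LINT t:{a<..<b}|lebesgue. v t * ?K t) - v z
      = integral (cbox z (z + \<delta>)) (\<lambda>t. (v t - v z) * ?K t)" by simp
  have "norm (integral (cbox z (z + \<delta>)) (\<lambda>t. (v t - v z) * ?K t))
      \<le> (\<eta> * M / \<delta>) * Henstock_Kurzweil_Integration.content (cbox z (z + \<delta>))"
  proof (rule integrable_bound)
    show "(\<lambda>t. (v t - v z) * ?K t) integrable_on cbox z (z + \<delta>)"
      unfolding cbox_interval using cv by (intro int continuous_intros)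
    fix t assume t: "t \<in> cbox z (z + \<delta>)"
    have "\<bar>?K t\<bar> \<le> M / \<delta>"
      using M[of "(t - z) / \<delta>"] assms(3) by (simp add: step_kernel_def divide_right_mono)
    moreover have "\<bar>v t - v z\<bar> \<le> \<eta>" using osc t by (simp add: cbox_interval)
    ultimately have "\<bar>v t - v z\<bar> * \<bar>?K t\<bar> \<le> \<eta> * (M / \<delta>)"
      by (intro mult_mono) auto
    then show "norm ((v t - v z) * ?K t) \<le> \<eta> * M / \<delta>"
      by (simp add: abs_mult)
  next
    show "0 \<le> \<eta> * M / \<delta>"
      using osc[of z] M[of 0] assms(3) by (auto intro!: order.trans[OF abs_ge_zero])
  qed
  then show ?thesis using eq assms(3) by simp
qed

lemma step_kernel_integral_tendsto:
  fixes d :: "nat \<Rightarrow> real"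
  assumes cont: "continuous_on {a<..<b} v" and "a < z" and dpos: "\<And>n. d n > 0"
    and db: "\<And>n. z + d n < b" and "d \<longlonglongrightarrow> 0"
  shows "(\<lambda>n. LINT t:{a<..<b}|lebesgue. v t * step_kernel (d n) z t) \<longlonglongrightarrow> v z"
  unfolding tendsto_iff dist_real_def
proof (intro allI impI)
  fix r :: real assume "r > 0"
  obtain M where M: "M > 0" "\<And>s. \<bar>deriv smooth_step s\<bar> \<le> M"
    using deriv_smooth_step_bounded by blast
  define \<eta> where "\<eta> = r / (2 * M)"
  have \<eta>: "\<eta> > 0" "\<eta> * M < r" using \<open>r > 0\<close> M by (auto simp: \<eta>_def field_simps)
  have "z + d 0 < b" "d 0 > 0" by (fact db dpos)+
  then have "z \<in> {a<..<b}" using \<open>a < z\<close> by auto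
  then obtain \<rho> where \<rho>: "\<rho> > 0" "\<And>t. t \<in> {a<..<b} \<Longrightarrow> dist t z < \<rho> \<Longrightarrow> dist (v t) (v z) < \<eta>"
    using cont \<eta>(1) unfolding continuous_on_iff by blast
  have "\<forall>\<^sub>F n in sequentially. d n < \<rho>" using assms(5) \<rho>(1) by (rule order_tendstoD)
  then show "\<forall>\<^sub>F n in sequentially. \<bar>(LINT t:{a<..<b}|lebesgue. v t * step_kernel (d n) z t) - v z\<bar> < r"
  proof eventually_elim
    case (elim n)
    have "\<bar>v t - v z\<bar> \<le> \<eta>" if "t \<in> {z..z + d n}" for t
      using \<rho>(2)[of t] that elim assms(2) db[of n] by (auto simp: dist_real_def)
    then have "\<bar>(LINT t:{a<..<b}|lebesgue. v t * step_kernel (d n) z t) - v z\<bar> \<le> \<eta> * M"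
      by (rule step_kernel_integral_approx[OF cont assms(2) dpos db M(2)])
    then show ?case using \<eta>(2) by linarith
  qed
qed

definition smoothed_indicator :: "real \<Rightarrow> real \<Rightarrow> real \<Rightarrow> real \<Rightarrow> real" where
  "smoothed_indicator x y \<delta> t = smooth_step ((t - x) / \<delta>) - smooth_step ((t - y) / \<delta>)"

lemma test_fun_smoothed_indicator:
  assumes "a < x" "x < y" "\<delta> > 0" "y + \<delta> < b"
  shows "test_fun a b (smoothed_indicator x y \<delta>)"
proof (rule test_funI[where c = x and d = "y + \<delta>"])
  have "n_times_differentiable n (\<lambda>t. smooth_step ((1 / \<delta>) * t + (- c / \<delta>)))" for n c
    by (intro n_times_differentiable_affine n_times_differentiable_smooth_step)
  then have "n_times_differentiable n (\<lambda>t. smooth_step ((t - c) / \<delta>))" for n c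
    by (simp add: diff_divide_distrib add.commute)
  then show "n_times_differentiable n (smoothed_indicator x y \<delta>)" for n
    unfolding smoothed_indicator_def[abs_def] by (intro n_times_differentiable_diff)
  fix t assume "t \<notin> {x..y + \<delta>}"
  then have "t < x \<or> t > y + \<delta>" by auto
  then show "smoothed_indicator x y \<delta> t = 0"
    using assms by (auto simp: smoothed_indicator_def smooth_step_eq_0 smooth_step_eq_1 divide_simps)
qed (use assms in auto)

lemma deriv_smoothed_indicator:
  "\<delta> > 0 \<Longrightarrow> deriv (smoothed_indicator x y \<delta>) t = step_kernel \<delta> x t - step_kernel \<delta> y t"
  unfolding smoothed_indicator_def[abs_def]
  by (intro DERIV_imp_deriv DERIV_diff smooth_step_scaled_has_derivative)

lemma smoothed_indicator_bounded: "\<bar>smoothed_indicator x y \<delta> t\<bar> \<le> 1"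
  using smooth_step_bounds[of "(t - x) / \<delta>"] smooth_step_bounds[of "(t - y) / \<delta>"]
  by (auto simp: smoothed_indicator_def)

lemma smoothed_indicator_measurable:
  assumes "\<delta> > 0"
  shows "smoothed_indicator x y \<delta> \<in> borel_measurable lebesgue"
proof -
  have "continuous_on UNIV (smoothed_indicator x y \<delta>)"
    unfolding smoothed_indicator_def[abs_def] using assms
    by (intro continuous_on_diff continuous_on_compose2[OF continuous_on_smooth_step]
        continuous_intros) auto
  then have "smoothed_indicator x y \<delta> \<in> borel_measurable borel"
    by (rule borel_measurable_continuous_onI)
  then show ?thesis by (auto intro: measurable_completion)
qed

lemma smoothed_indicator_tendsto:
  assumes "x < y" "\<And>n. d n > 0" "d \<longlonglongrightarrow> 0"
  shows "(\<lambda>n. smoothed_indicator x y (d n) t) \<longlonglongrightarrow> indicator {x<..y} t"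
proof -
  consider "t \<le> x" | "x < t" "t \<le> y" | "y < t" by linarith
  then have "\<forall>\<^sub>F n in sequentially. smoothed_indicator x y (d n) t = indicator {x<..y} t"
  proof cases
    case 1
    then have "smoothed_indicator x y (d n) t = 0" for n
      using assms(1) assms(2)[of n] by (auto simp: smoothed_indicator_def smooth_step_eq_0 divide_le_0_iff)
    then show ?thesis using 1 by simp
  next
    case 2
    have "\<forall>\<^sub>F n in sequentially. d n < t - x" using assms(3) 2 by (intro order_tendstoD) auto
    then show ?thesis
    proof eventually_elim
      case (elim n)
      then have "(t - x) / d n \<ge> 1" "(t - y) / d n \<le> 0" using assms(2)[of n] 2
        by (auto simp: le_divide_eq divide_le_0_iff)
      then show ?case using 2 by (simp add: smoothed_indicator_def smooth_step_eq_0 smooth_step_eq_1)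
    qed
  next
    case 3
    have "\<forall>\<^sub>F n in sequentially. d n < t - y" using assms(3) 3 by (intro order_tendstoD) auto
    then show ?thesis
    proof eventually_elim
      case (elim n)
      then have "(t - x) / d n \<ge> 1" "(t - y) / d n \<ge> 1" using assms(1) assms(2)[of n]
        by (auto simp: le_divide_eq)
      then show ?case using 3 by (simp add: smoothed_indicator_def smooth_step_eq_1)
    qed
  qed
  then show ?thesis by (rule tendsto_eventually)
qed

lemma set_integral_mult_tendsto_indicator:
  fixes f :: "real \<Rightarrow> real"
  assumes f: "set_integrable lebesgue A f" and "B \<subseteq> A" "B \<in> sets lebesgue"
    and meas: "\<And>n. \<phi> n \<in> borel_measurable lebesgue" and bound: "\<And>n t. \<bar>\<phi> n t\<bar> \<le> 1"
    and lim: "\<And>t. (\<lambda>n. \<phi> n t) \<longlonglongrightarrow> indicator B t"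
  shows "(\<lambda>n. LINT t:A|lebesgue. f t * \<phi> n t) \<longlonglongrightarrow> (LINT t:B|lebesgue. f t)"
proof -
  let ?f = "\<lambda>t. indicator A t *\<^sub>R f t"
  have fm: "?f \<in> borel_measurable lebesgue"
    using f unfolding set_integrable_def by (rule borel_measurable_integrable)
  have "(\<lambda>n. integral\<^sup>L lebesgue (\<lambda>t. ?f t * \<phi> n t)) \<longlonglongrightarrow> integral\<^sup>L lebesgue (\<lambda>t. ?f t * indicator B t)"
  proof (rule integral_dominated_convergence[where w = "\<lambda>t. \<bar>?f t\<bar>"])
    show "integrable lebesgue (\<lambda>t. \<bar>?f t\<bar>)"
      using f unfolding set_integrable_def by (rule integrable_abs)
    show "AE t in lebesgue. norm (?f t * \<phi> n t) \<le> \<bar>?f t\<bar>" for n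
      using bound[of n] by (auto simp: abs_mult intro!: mult_left_le)
    show "AE t in lebesgue. (\<lambda>n. ?f t * \<phi> n t) \<longlonglongrightarrow> ?f t * indicator B t"
      by (intro AE_I2 tendsto_mult_left lim)
  qed (use fm meas assms(3) in \<open>auto intro!: borel_measurable_times\<close>)
  moreover have "(\<lambda>t. ?f t * indicator B t) = (\<lambda>t. indicator B t *\<^sub>R f t)"
    using \<open>B \<subseteq> A\<close> by (auto simp: indicator_def fun_eq_iff)
  ultimately have "(\<lambda>n. integral\<^sup>L lebesgue (\<lambda>t. ?f t * \<phi> n t)) \<longlonglongrightarrow> (LINT t:B|lebesgue. f t)"
    unfolding set_lebesgue_integral_def by simp
  then show ?thesis unfolding set_lebesgue_integral_def by (simp add: mult_ac)
qed

lemma H1_fundamental_theorem: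
  assumes H: "H1 a b v dv" and "a < x" "x < y" "y < b"
  shows "v y - v x = (LINT t:{x<..y}|lebesgue. dv t)"
proof -
  define d where "d n = (b - y) / real (Suc (Suc n))" for n
  have dpos: "d n > 0" and "d n < b - y" for n
    using assms(4) by (auto simp: d_def divide_less_eq)
  then have db: "y + d n < b" for n by (simp add: algebra_simps)
  have "(\<lambda>n. (b - y) / real (Suc (Suc n))) \<longlonglongrightarrow> 0"
    by (intro tendsto_divide_0[OF tendsto_const] filterlim_at_top_imp_at_infinity
        filterlim_real_sequentially[THEN filterlim_sequentially_Suc[THEN iffD2],
          THEN filterlim_sequentially_Suc[THEN iffD2]])
  then have d0: "d \<longlonglongrightarrow> 0" by (simp add: d_def[abs_def])
  have L2: "L2 a b v" "L2 a b dv" and vc: "continuous_on {a<..<b} v"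
    using H by (auto simp: H1_def)
  have weak: "(LINT t:{a<..<b}|lebesgue. v t * deriv (smoothed_indicator x y (d n)) t)
      = - (LINT t:{a<..<b}|lebesgue. dv t * smoothed_indicator x y (d n) t)" for n
    using H test_fun_smoothed_indicator[OF assms(2,3) dpos db] unfolding H1_def by blast
  have kernel_int: "set_integrable lebesgue {a<..<b} (\<lambda>t. v t * step_kernel (d n) z t)" for z n
    by (intro L2_integrable_mult L2 L2_continuous_on continuous_on_step_kernel dpos)
  have "(\<lambda>n. LINT t:{a<..<b}|lebesgue. v t * deriv (smoothed_indicator x y (d n)) t) \<longlonglongrightarrow> v x - v y"
    unfolding deriv_smoothed_indicator[OF dpos] right_diff_distrib
      set_integral_diff(2)[OF kernel_int kernel_int]
    using assms dpos db d0
    by (intro tendsto_diff step_kernel_integral_tendsto[OF vc]) (auto intro: add_strict_right_mono less_trans)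
  moreover have "(\<lambda>n. LINT t:{a<..<b}|lebesgue. v t * deriv (smoothed_indicator x y (d n)) t)
      \<longlonglongrightarrow> - (LINT t:{x<..y}|lebesgue. dv t)"
    unfolding weak using assms
    by (intro tendsto_minus set_integral_mult_tendsto_indicator L2_integrable L2
        smoothed_indicator_measurable smoothed_indicator_bounded smoothed_indicator_tendsto dpos d0) auto
  ultimately show ?thesis using LIMSEQ_unique by fastforce
qed

lemma set_integral_Ioc_square_le:
  fixes f :: "real \<Rightarrow> real"
  assumes "x < y" "set_integrable lebesgue {x<..y} f" "set_integrable lebesgue {x<..y} (\<lambda>t. (f t)^2)"
  shows "(LINT t:{x<..y}|lebesgue. f t)^2 \<le> (y - x) * (LINT t:{x<..y}|lebesgue. (f t)^2)"
proof -
  define S where "S = (LINT t:{x<..y}|lebesgue. f t)"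
  define k where "k = S / (y - x)"
  have const: "set_integrable lebesgue {x<..y} (\<lambda>t. c)" for c :: real
  proof -
    have "set_integrable lebesgue {x..y} (\<lambda>t. c)" by (rule absolutely_integrable_continuous_real) simp
    then show ?thesis by (rule set_integrable_subset) auto
  qed
  have "2 * k * S = (LINT t:{x<..y}|lebesgue. 2 * k * f t)"
    by (simp add: S_def set_integral_mult_right)
  also have "\<dots> \<le> (LINT t:{x<..y}|lebesgue. (f t)^2 + k^2)"
  proof (intro set_integral_mono set_integral_add set_integrable_mult_right assms(2,3) const)
    show "2 * k * f t \<le> (f t)^2 + k^2" for t
      using sum_squares_bound[of k "f t"] by (simp add: add.commute)
  qed
  also have "\<dots> = (LINT t:{x<..y}|lebesgue. (f t)^2) + k^2 * (y - x)"
    using assms(1) set_integral_add(2)[OF assms(3) const] set_integral_const[of "{x<..y}" lebesgue "k^2"]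
    by simp
  finally have "2 * S^2 / (y - x) \<le> (LINT t:{x<..y}|lebesgue. (f t)^2) + S^2 / (y - x)"
    using assms(1) by (simp add: k_def power2_eq_square)
  then have "S^2 / (y - x) \<le> (LINT t:{x<..y}|lebesgue. (f t)^2)"
    by simp
  then show ?thesis
    using assms(1) by (simp add: S_def divide_le_eq mult.commute)
qed

lemma set_integral_square_mono:
  fixes f :: "real \<Rightarrow> real"
  assumes "set_integrable lebesgue B (\<lambda>t. (f t)^2)" "A \<subseteq> B" "A \<in> sets lebesgue"
  shows "(LINT t:A|lebesgue. (f t)^2) \<le> (LINT t:B|lebesgue. (f t)^2)"
  unfolding set_lebesgue_integral_def
proof (rule integral_mono)
  show "integrable lebesgue (\<lambda>t. indicat_real A t *\<^sub>R (f t)^2)"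
    using set_integrable_subset[OF assms(1,3,2)] unfolding set_integrable_def .
  show "integrable lebesgue (\<lambda>t. indicat_real B t *\<^sub>R (f t)^2)"
    using assms(1) unfolding set_integrable_def .
qed (use assms(2) in \<open>auto simp: indicator_def\<close>)

lemma H1_increment_square_bound:
  assumes H: "H1 a b v dv" and "x \<in> {a<..<b}" "y \<in> {a<..<b}"
  shows "(v y - v x)^2 \<le> \<bar>y - x\<bar> * (LINT t:{a<..<b}|lebesgue. (dv t)^2)"
proof -
  have dv: "L2 a b dv" using H by (simp add: H1_def)
  have *: "(v q - v p)^2 \<le> (q - p) * (LINT t:{a<..<b}|lebesgue. (dv t)^2)"
    if "a < p" "p < q" "q < b" for p q
  proof -
    have sub: "{p<..q} \<subseteq> {a<..<b}" using that by auto
    have i1: "set_integrable lebesgue {p<..q} dv"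
      by (rule set_integrable_subset[OF L2_integrable[OF dv]]) (use sub in auto)
    have i2: "set_integrable lebesgue {p<..q} (\<lambda>t. (dv t)^2)"
      by (rule set_integrable_subset[of _ "{a<..<b}"]) (use dv sub in \<open>auto simp: L2_def\<close>)
    have "(v q - v p)^2 \<le> (q - p) * (LINT t:{p<..q}|lebesgue. (dv t)^2)"
      unfolding H1_fundamental_theorem[OF H that] by (rule set_integral_Ioc_square_le[OF that(2) i1 i2])
    also have "\<dots> \<le> (q - p) * (LINT t:{a<..<b}|lebesgue. (dv t)^2)"
      using dv sub that(2) by (intro mult_left_mono set_integral_square_mono) (auto simp: L2_def)
    finally show ?thesis .
  qed
  consider "x < y" | "x = y" | "y < x" by linarith
  then show ?thesis
    using assms(2,3) *[of x y] *[of y x] set_integral_square_nonneg[where f=dv]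
    by cases (auto simp: power2_commute)
qed

definition H1_norm_sq :: "real \<Rightarrow> real \<Rightarrow> (real \<Rightarrow> real) \<Rightarrow> (real \<Rightarrow> real) \<Rightarrow> real" where
  "H1_norm_sq a b v dv = (LINT t:{a<..<b}|lebesgue. (v t)^2) + (LINT t:{a<..<b}|lebesgue. (dv t)^2)"

lemma H1_norm_sq_nonneg: "H1_norm_sq a b v dv \<ge> 0"
  unfolding H1_norm_sq_def by (intro add_nonneg_nonneg set_integral_square_nonneg)

definition sobolev_const :: "real \<Rightarrow> real \<Rightarrow> real" where
  "sobolev_const a b = max (2 / (b - a)) (2 * (b - a))"

lemma H1_square_bound:
  assumes H: "H1 a b v dv" and x: "x \<in> {a<..<b}"
  shows "(v x)^2 \<le> sobolev_const a b * H1_norm_sq a b v dv"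
proof -
  let ?I = "{a<..<b}" and ?Nv = "LINT t:{a<..<b}|lebesgue. (v t)^2"
    and ?Nd = "LINT t:{a<..<b}|lebesgue. (dv t)^2"
  have sq: "set_integrable lebesgue ?I (\<lambda>t. (v t)^2)" using H by (simp add: H1_def L2_def)
  have const: "set_integrable lebesgue ?I (\<lambda>t. c)" for c :: real by (rule L2_integrable[OF L2_const])
  have ab: "a < b" using x by auto
  txt \<open>Average the bound \<open>v(x)\<^sup>2 \<le> 2 v(y)\<^sup>2 + 2 (v(x) - v(y))\<^sup>2\<close> over \<open>y\<close>.\<close>
  have pointwise: "(v x)^2 \<le> 2 * (v y)^2 + 2 * (b - a) * ?Nd" if y: "y \<in> ?I" for y
  proof -
    have "(v x)^2 \<le> 2 * (v y)^2 + 2 * (v x - v y)^2"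
      using zero_le_power2[of "v x - 2 * v y"] by (simp add: power2_eq_square algebra_simps)
    also have "(v x - v y)^2 \<le> \<bar>x - y\<bar> * ?Nd"
      by (rule H1_increment_square_bound[OF H y x])
    also have "\<dots> \<le> (b - a) * ?Nd"
      using x y by (intro mult_right_mono set_integral_square_nonneg) auto
    finally show ?thesis by (simp add: algebra_simps)
  qed
  have "(b - a) * (v x)^2 = (LINT y:?I|lebesgue. (v x)^2)"
    using ab set_integral_const[of ?I lebesgue "(v x)^2"] by simp
  also have "\<dots> \<le> (LINT y:?I|lebesgue. 2 * (v y)^2 + 2 * (b - a) * ?Nd)"
    using pointwise by (intro set_integral_mono set_integral_add set_integrable_mult_right sq const) auto
  also have "\<dots> = 2 * ?Nv + (b - a) * (2 * (b - a) * ?Nd)"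
    using ab set_integral_add(2)[OF set_integrable_mult_right[OF sq] const]
      set_integral_const[of ?I lebesgue "2 * (b - a) * ?Nd"]
    by (simp add: set_integral_mult_right)
  finally have "(v x)^2 \<le> 2 / (b - a) * ?Nv + 2 * (b - a) * ?Nd"
    using ab by (simp add: field_simps)
  also have "\<dots> \<le> sobolev_const a b * ?Nv + sobolev_const a b * ?Nd"
    by (intro add_mono mult_right_mono set_integral_square_nonneg) (auto simp: sobolev_const_def)
  finally show ?thesis by (simp add: H1_norm_sq_def algebra_simps)
qed

lemma H1_abs_bound:
  "H1 a b v dv \<Longrightarrow> x \<in> {a<..<b} \<Longrightarrow> \<bar>v x\<bar> \<le> sqrt (sobolev_const a b) * sqrt (H1_norm_sq a b v dv)"
  using real_sqrt_le_mono[OF H1_square_bound] by (simp add: real_sqrt_mult)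

lemma H1_holder_half:
  assumes "H1 a b v dv" "x \<in> {a<..<b}" "c \<in> {a<..<b}"
  shows "\<bar>v x - v c\<bar> \<le> sqrt \<bar>x - c\<bar> * sqrt (LINT t:{a<..<b}|lebesgue. (dv t)^2)"
  using real_sqrt_le_mono[OF H1_increment_square_bound[OF assms(1,3,2)]] by (simp add: real_sqrt_mult)

lemma H1_mult_holder_half:
  assumes P: "H1 a b \<psi> d\<psi>" and H: "H1 a b w dw" and x: "x \<in> {a<..<b}" and c: "c \<in> {a<..<b}"
  shows "\<bar>\<psi> x * w x - \<psi> c * w c\<bar>
    \<le> sqrt (H1_norm_sq a b w dw) * (sqrt (LINT t:{a<..<b}|lebesgue. (d\<psi> t)^2) * sqrt (sobolev_const a b)
        + \<bar>\<psi> c\<bar>) * sqrt \<bar>x - c\<bar>"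
proof -
  let ?N = "H1_norm_sq a b w dw" and ?Np = "LINT t:{a<..<b}|lebesgue. (d\<psi> t)^2"
    and ?Nd = "LINT t:{a<..<b}|lebesgue. (dw t)^2"
  have "sqrt ?Nd \<le> sqrt ?N"
    using set_integral_square_nonneg[where f=w] by (simp add: H1_norm_sq_def)
  then have w_incr: "\<bar>w x - w c\<bar> \<le> sqrt \<bar>x - c\<bar> * sqrt ?N"
    using H1_holder_half[OF H x c] by (meson mult_left_mono order.trans real_sqrt_ge_zero abs_ge_zero)
  have "\<bar>\<psi> x * w x - \<psi> c * w c\<bar> = \<bar>(\<psi> x - \<psi> c) * w x + \<psi> c * (w x - w c)\<bar>"
    by (simp add: algebra_simps)
  also have "\<dots> \<le> \<bar>\<psi> x - \<psi> c\<bar> * \<bar>w x\<bar> + \<bar>\<psi> c\<bar> * \<bar>w x - w c\<bar>"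
    by (metis abs_mult abs_triangle_ineq)
  also have "\<dots> \<le> (sqrt \<bar>x - c\<bar> * sqrt ?Np) * (sqrt (sobolev_const a b) * sqrt ?N)
      + \<bar>\<psi> c\<bar> * (sqrt \<bar>x - c\<bar> * sqrt ?N)"
    using H1_holder_half[OF P x c] H1_abs_bound[OF H x] w_incr
    by (intro add_mono mult_mono mult_left_mono) auto
  also have "\<dots> = sqrt ?N * (sqrt ?Np * sqrt (sobolev_const a b) + \<bar>\<psi> c\<bar>) * sqrt \<bar>x - c\<bar>"
    by (simp add: algebra_simps)
  finally show ?thesis .
qed

section \<open>The \<open>tanh\<close> profile and the diffuse interface\<close>

lemma tanh_square_le_1: "(tanh (x :: real))^2 \<le> 1"
  using tanh_real_lt_1[of x] tanh_real_gt_neg1[of x] by (simp add: abs_square_le_1)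

lemma tanh_div_tendsto_1: "s > 0 \<Longrightarrow> ((\<lambda>\<epsilon>. tanh (s / \<epsilon>)) \<longlongrightarrow> 1) (at_right (0::real))"
  by (rule filterlim_compose[OF tanh_real_at_top]) real_asymp

lemma tanh_div_tendsto_neg1: "s < 0 \<Longrightarrow> ((\<lambda>\<epsilon>. tanh (s / \<epsilon>)) \<longlongrightarrow> -1) (at_right (0::real))"
  using tendsto_minus[OF tanh_div_tendsto_1[of "- s"]] by simp

definition tanh_profile :: "real \<Rightarrow> real \<Rightarrow> real \<Rightarrow> real" where
  "tanh_profile \<epsilon> c x = (1 + tanh ((x - c) / \<epsilon>)) / 2"

definition tanh_profile_deriv :: "real \<Rightarrow> real \<Rightarrow> real \<Rightarrow> real" where
  "tanh_profile_deriv \<epsilon> c x = (1 - (tanh ((x - c) / \<epsilon>))^2) / (2 * \<epsilon>)"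

lemma tanh_profile_bounds: "0 \<le> tanh_profile \<epsilon> c x" "tanh_profile \<epsilon> c x \<le> 1"
  using tanh_real_bounds[of "(x - c) / \<epsilon>"] by (auto simp: tanh_profile_def)

lemma tanh_profile_deriv_nonneg: "\<epsilon> > 0 \<Longrightarrow> 0 \<le> tanh_profile_deriv \<epsilon> c x"
  using tanh_square_le_1 by (simp add: tanh_profile_deriv_def)

lemma tanh_profile_has_derivative:
  "\<epsilon> > 0 \<Longrightarrow> (tanh_profile \<epsilon> c has_real_derivative tanh_profile_deriv \<epsilon> c x) (at x)"
  unfolding tanh_profile_def[abs_def] tanh_profile_deriv_def
  by (auto intro!: derivative_eq_intros simp: cosh_real_pos[THEN less_imp_neq, THEN not_sym] field_simps)

lemma continuous_on_tanh_profile_deriv: "continuous_on A (tanh_profile_deriv \<epsilon> c)"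
  unfolding tanh_profile_deriv_def[abs_def]
  by (cases "\<epsilon> = 0") (auto intro!: continuous_intros simp: cosh_real_pos[THEN less_imp_neq, THEN not_sym])

lemma tanh_profile_deriv_has_integral:
  "\<epsilon> > 0 \<Longrightarrow> l \<le> r \<Longrightarrow>
   (tanh_profile_deriv \<epsilon> c has_integral tanh_profile \<epsilon> c r - tanh_profile \<epsilon> c l) {l..r}"
  by (rule fundamental_theorem_of_calculus)
     (auto intro!: DERIV_subset[OF tanh_profile_has_derivative,
         unfolded has_real_derivative_iff_has_vector_derivative])

lemma tanh_profile_deriv_integrable: "(\<lambda>x. f x * tanh_profile_deriv \<epsilon> c x) integrable_on {l..r}"
  if "continuous_on {l..r} f"
  using that by (intro integrable_continuous_real continuous_intros continuous_on_tanh_profile_deriv)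

lemma integral_tanh_profile_deriv_le:
  assumes "\<epsilon> > 0" "p \<le> q" "\<And>x. x \<in> {p..q} \<Longrightarrow> sqrt \<bar>x - c\<bar> \<le> K"
  shows "integral {p..q} (\<lambda>x. sqrt \<bar>x - c\<bar> * tanh_profile_deriv \<epsilon> c x)
      \<le> K * (tanh_profile \<epsilon> c q - tanh_profile \<epsilon> c p)"
proof -
  have "integral {p..q} (\<lambda>x. sqrt \<bar>x - c\<bar> * tanh_profile_deriv \<epsilon> c x)
      \<le> integral {p..q} (\<lambda>x. K * tanh_profile_deriv \<epsilon> c x)"
    using assms(3) tanh_profile_deriv_nonneg[OF assms(1)]
    by (intro integral_le tanh_profile_deriv_integrable continuous_intros mult_right_mono) auto
  also have "\<dots> = K * (tanh_profile \<epsilon> c q - tanh_profile \<epsilon> c p)"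
    using integral_unique[OF tanh_profile_deriv_has_integral[OF assms(1,2)]] by simp
  finally show ?thesis .
qed

text \<open>Split at \<open>c \<plusminus> \<eta>\<close>: near \<open>c\<close> the weight \<open>sqrt \<bar>x - c\<bar>\<close> is small, away from \<open>c\<close>
  the profile has almost no mass left.\<close>
lemma integral_sqrt_dist_tanh_profile_deriv_le:
  assumes \<epsilon>: "\<epsilon> > 0" and \<eta>: "\<eta> > 0" and "l + \<eta> \<le> c" "c + \<eta> \<le> r"
  shows "integral {l..r} (\<lambda>x. sqrt \<bar>x - c\<bar> * tanh_profile_deriv \<epsilon> c x)
      \<le> sqrt \<eta> + sqrt (r - l) * (1 - tanh (\<eta> / \<epsilon>))"
proof -
  let ?g = "\<lambda>x. sqrt \<bar>x - c\<bar> * tanh_profile_deriv \<epsilon> c x" and ?P = "tanh_profile \<epsilon> c"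
  have int: "?g integrable_on {p..q}" for p q
    by (intro tanh_profile_deriv_integrable continuous_intros)
  have "integral {l..r} ?g = integral {l..c - \<eta>} ?g + integral {c - \<eta>..c + \<eta>} ?g + integral {c + \<eta>..r} ?g"
    using Henstock_Kurzweil_Integration.integral_combine[OF _ _ int, of l "c - \<eta>" "c + \<eta>"]
      Henstock_Kurzweil_Integration.integral_combine[OF _ _ int, of l "c + \<eta>" r] assms
    by simp
  also have "\<dots> \<le> sqrt (r - l) * (?P (c - \<eta>) - ?P l) + sqrt \<eta> * (?P (c + \<eta>) - ?P (c - \<eta>))
      + sqrt (r - l) * (?P r - ?P (c + \<eta>))"
    using assms
    by (intro add_mono integral_tanh_profile_deriv_le) (auto intro: real_sqrt_le_mono)
  also have "\<dots> = sqrt \<eta> * (?P (c + \<eta>) - ?P (c - \<eta>))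
      + sqrt (r - l) * ((?P (c - \<eta>) - ?P l) + (?P r - ?P (c + \<eta>)))"
    by (simp add: algebra_simps)
  also have "\<dots> \<le> sqrt \<eta> + sqrt (r - l) * (1 - tanh (\<eta> / \<epsilon>))"
  proof -
    have "?P (c - \<eta>) = (1 - tanh (\<eta> / \<epsilon>)) / 2" "?P (c + \<eta>) = (1 + tanh (\<eta> / \<epsilon>)) / 2"
      by (simp_all add: tanh_profile_def)
    then show ?thesis
      using tanh_profile_bounds[of \<epsilon> c l] tanh_profile_bounds[of \<epsilon> c r] tanh_real_bounds[of "\<eta> / \<epsilon>"]
        assms(2-4)
      by (intro add_mono mult_left_le mult_left_mono) auto
  qed
  finally show ?thesis .
qed

text \<open>The bound of the previous lemma for the splitting radius \<open>\<eta> = sqrt \<epsilon>\<close>, plus the defect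
  of the profile's mass on \<open>[l, r]\<close>.\<close>
definition concentration_error :: "real \<Rightarrow> real \<Rightarrow> real \<Rightarrow> real \<Rightarrow> real" where
  "concentration_error l c r \<epsilon> = sqrt (sqrt \<epsilon>) + sqrt (r - l) * (1 - tanh (sqrt \<epsilon> / \<epsilon>))
     + \<bar>tanh_profile \<epsilon> c r - tanh_profile \<epsilon> c l - 1\<bar>"

lemma concentration_error_tendsto_0:
  assumes "l < c" "c < r"
  shows "(concentration_error l c r \<longlongrightarrow> 0) (at_right 0)"
proof -
  have "((\<lambda>\<epsilon>::real. tanh (sqrt \<epsilon> / \<epsilon>)) \<longlongrightarrow> 1) (at_right 0)"
    by (rule filterlim_compose[OF tanh_real_at_top]) real_asymp
  moreover have "((\<lambda>\<epsilon>. tanh ((r - c) / \<epsilon>)) \<longlongrightarrow> 1) (at_right 0)"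
    "((\<lambda>\<epsilon>. tanh ((l - c) / \<epsilon>)) \<longlongrightarrow> -1) (at_right 0)"
    using assms by (auto intro!: tanh_div_tendsto_1 tanh_div_tendsto_neg1)
  moreover have "((\<lambda>\<epsilon>::real. sqrt (sqrt \<epsilon>)) \<longlongrightarrow> 0) (at_right 0)" by real_asymp
  ultimately have "(concentration_error l c r \<longlongrightarrow> 0 + sqrt (r - l) * (1 - 1)
      + \<bar>(1 + 1) / 2 - (1 + -1) / 2 - 1\<bar>) (at_right 0)"
    unfolding concentration_error_def[abs_def] tanh_profile_def by (intro tendsto_intros) auto
  then show ?thesis by simp
qed

lemma tanh_profile_deriv_concentration:
  assumes \<epsilon>: "\<epsilon> > 0" and "l + sqrt \<epsilon> \<le> c" "c + sqrt \<epsilon> \<le> r"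
    and F_int: "(\<lambda>x. F x * tanh_profile_deriv \<epsilon> c x) integrable_on {l..r}"
    and F_holder: "\<And>x. x \<in> {l<..<r} \<Longrightarrow> \<bar>F x - F c\<bar> \<le> C * sqrt \<bar>x - c\<bar>"
    and F_c: "\<bar>F c\<bar> \<le> C"
  shows "\<bar>integral {l..r} (\<lambda>x. F x * tanh_profile_deriv \<epsilon> c x) - F c\<bar> \<le> C * concentration_error l c r \<epsilon>"
proof -
  let ?D = "tanh_profile_deriv \<epsilon> c" and ?P = "tanh_profile \<epsilon> c"
  have \<eta>: "sqrt \<epsilon> > 0" using \<epsilon> by simp
  have C: "C \<ge> 0" using F_c by linarith
  have lr: "l \<le> r" using assms \<eta> by linarith
  have Fc_int: "(\<lambda>x. F c * ?D x) integrable_on {l..r}"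
    by (intro tanh_profile_deriv_integrable continuous_intros)
  let ?X = "integral {l..r} (\<lambda>x. (F x - F c) * ?D x)" and ?E = "?P r - ?P l - 1"
  have "integral {l..r} (\<lambda>x. F x * ?D x) - F c = ?X + F c * ?E"
    using integral_diff[OF F_int Fc_int] integral_unique[OF tanh_profile_deriv_has_integral[OF \<epsilon> lr]]
    by (simp add: algebra_simps)
  then have "\<bar>integral {l..r} (\<lambda>x. F x * ?D x) - F c\<bar> \<le> \<bar>?X\<bar> + \<bar>F c * ?E\<bar>"
    by (simp only: abs_triangle_ineq)
  moreover have "\<bar>?X\<bar> \<le> C * integral {l..r} (\<lambda>x. sqrt \<bar>x - c\<bar> * ?D x)"
  proof -
    have "norm (integral {l<..<r} (\<lambda>x. (F x - F c) * ?D x))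
        \<le> integral {l<..<r} (\<lambda>x. C * (sqrt \<bar>x - c\<bar> * ?D x))"
    proof (rule integral_norm_bound_integral)
      show "(\<lambda>x. (F x - F c) * ?D x) integrable_on {l<..<r}"
        using integrable_diff[OF F_int Fc_int]
        by (simp add: integrable_on_open_interval_real left_diff_distrib)
      show "(\<lambda>x. C * (sqrt \<bar>x - c\<bar> * ?D x)) integrable_on {l<..<r}"
        unfolding integrable_on_open_interval_real
        by (intro integrable_continuous_real continuous_intros continuous_on_tanh_profile_deriv)
      show "norm ((F x - F c) * ?D x) \<le> C * (sqrt \<bar>x - c\<bar> * ?D x)" if "x \<in> {l<..<r}" for x
        using F_holder[OF that] tanh_profile_deriv_nonneg[OF \<epsilon>, of c x]
        by (simp add: abs_mult mult.assoc[symmetric] mult_right_mono)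
    qed
    then show ?thesis
      by (simp add: integral_open_interval_real)
  qed
  moreover have "C * integral {l..r} (\<lambda>x. sqrt \<bar>x - c\<bar> * ?D x)
      \<le> C * (sqrt (sqrt \<epsilon>) + sqrt (r - l) * (1 - tanh (sqrt \<epsilon> / \<epsilon>)))"
    by (rule mult_left_mono[OF integral_sqrt_dist_tanh_profile_deriv_le[OF \<epsilon> \<eta> assms(2,3)] C])
  moreover have "\<bar>F c * ?E\<bar> \<le> C * \<bar>?E\<bar>"
    using F_c by (simp add: abs_mult mult_right_mono)
  moreover have "C * concentration_error l c r \<epsilon>
      = C * (sqrt (sqrt \<epsilon>) + sqrt (r - l) * (1 - tanh (sqrt \<epsilon> / \<epsilon>))) + C * \<bar>?E\<bar>"
    unfolding concentration_error_def by (simp only: distrib_left)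
  ultimately show ?thesis by linarith
qed

lemma tanh_diff_div_commute: "tanh ((y - x) / \<epsilon>) = - tanh ((x - y) / (\<epsilon> :: real))"
  by (metis minus_diff_eq minus_divide_left tanh_minus)

lemma sdist_eq_min: "a1 < b1 \<Longrightarrow> sdist a1 b1 x = min (x - a1) (b1 - x)"
  by (auto simp: sdist_def min_def abs_if)

lemma phi_eps_bounds: "0 \<le> phi_eps a1 b1 \<epsilon> x" "phi_eps a1 b1 \<epsilon> x \<le> 1"
  using tanh_real_bounds[of "sdist a1 b1 x / \<epsilon>"] by (auto simp: phi_eps_def)

lemma continuous_on_phi_eps: "a1 < b1 \<Longrightarrow> \<epsilon> > 0 \<Longrightarrow> continuous_on A (phi_eps a1 b1 \<epsilon>)"
  unfolding phi_eps_def[abs_def] sdist_eq_min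
  by (intro continuous_intros) (auto simp: cosh_real_pos[THEN less_imp_neq, THEN not_sym])

lemma phi_eps_tendsto_indicator:
  assumes "a1 < b1" "x \<noteq> a1" "x \<noteq> b1"
  shows "((\<lambda>\<epsilon>. phi_eps a1 b1 \<epsilon> x) \<longlongrightarrow> indicator {a1<..<b1} x) (at_right 0)"
proof (cases "x \<in> {a1<..<b1}")
  case True
  then have "sdist a1 b1 x > 0" using assms by (simp add: sdist_eq_min)
  then have "((\<lambda>\<epsilon>. (1 + tanh (sdist a1 b1 x / \<epsilon>)) / 2) \<longlongrightarrow> (1 + 1) / 2) (at_right 0)"
    by (intro tendsto_intros tanh_div_tendsto_1) auto
  then show ?thesis using True by (simp add: phi_eps_def[abs_def])
next
  case False
  then have "sdist a1 b1 x < 0" using assms by (auto simp: sdist_eq_min min_def)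
  then have "((\<lambda>\<epsilon>. (1 + tanh (sdist a1 b1 x / \<epsilon>)) / 2) \<longlongrightarrow> (1 + -1) / 2) (at_right 0)"
    by (intro tendsto_intros tanh_div_tendsto_neg1) auto
  then show ?thesis using False by (simp add: phi_eps_def[abs_def])
qed

lemma phi_eps_defect_integral_tendsto_0:
  assumes "a1 < b1" and H: "set_integrable lebesgue {a<..<b} H" and "\<And>k. e k > 0" "e \<longlonglongrightarrow> 0"
  shows "(\<lambda>k. LINT x:{a<..<b}|lebesgue. (phi_eps a1 b1 (e k) x - indicator {a1<..<b1} x)^2 * H x)
      \<longlonglongrightarrow> 0"
proof -
  let ?\<rho> = "\<lambda>k x. (phi_eps a1 b1 (e k) x - indicator {a1<..<b1} x)^2"
    and ?H = "\<lambda>x. indicator {a<..<b} x *\<^sub>R H x"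
  have e: "filterlim e (at_right 0) sequentially"
    using assms(3,4) by (intro tendsto_imp_filterlim_at_right) auto
  have H_int: "integrable lebesgue ?H"
    using H unfolding set_integrable_def .
  have "phi_eps a1 b1 (e k) \<in> borel_measurable borel" for k
    using continuous_on_phi_eps[OF assms(1,3)] by (rule borel_measurable_continuous_onI)
  then have \<rho>_meas: "?\<rho> k \<in> borel_measurable lebesgue" for k
    by (intro borel_measurable_power borel_measurable_diff) (auto intro: measurable_completion)
  have "(\<lambda>k. integral\<^sup>L lebesgue (\<lambda>x. ?\<rho> k x * ?H x)) \<longlonglongrightarrow> integral\<^sup>L lebesgue (\<lambda>x::real. 0::real)"
  proof (rule integral_dominated_convergence[where w = "\<lambda>x. norm (?H x)"])
    show "(\<lambda>x. ?\<rho> k x * ?H x) \<in> borel_measurable lebesgue" for k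
      using \<rho>_meas borel_measurable_integrable[OF H_int] by (rule borel_measurable_times)
    show "AE x in lebesgue. norm (?\<rho> k x * ?H x) \<le> norm (?H x)" for k
    proof (rule AE_I2)
      fix x
      have "?\<rho> k x \<le> 1"
        using phi_eps_bounds[of a1 b1 "e k" x] by (auto simp: indicator_def abs_square_le_1)
      then show "norm (?\<rho> k x * ?H x) \<le> norm (?H x)"
        by (simp add: abs_mult mult_left_le_one_le)
    qed
    show "AE x in lebesgue. (\<lambda>k. ?\<rho> k x * ?H x) \<longlonglongrightarrow> 0"
      using AE_completion[OF AE_lborel_singleton[of a1]] AE_completion[OF AE_lborel_singleton[of b1]]
    proof eventually_elim
      case (elim x)
      have "(\<lambda>k. phi_eps a1 b1 (e k) x) \<longlonglongrightarrow> indicator {a1<..<b1} x"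
        using filterlim_compose[OF phi_eps_tendsto_indicator[OF assms(1)] e] elim by auto
      then have "(\<lambda>k. ?\<rho> k x * ?H x) \<longlonglongrightarrow> (indicator {a1<..<b1} x - indicator {a1<..<b1} x)^2 * ?H x"
        by (intro tendsto_intros)
      then show ?case by simp
    qed
  qed (use H_int in simp_all)
  then show ?thesis unfolding set_lebesgue_integral_def by (simp add: mult_ac)
qed

text \<open>\<open>\<bar>\<phi>\<^sub>\<epsilon>'\<bar>\<close>, written without \<open>deriv\<close>; it differs from \<open>\<bar>deriv (phi_eps a1 b1 \<epsilon>)\<bar>\<close> only at the
  midpoint of \<open>[a1, b1]\<close>, where \<open>sdist\<close> has a kink.\<close>
definition interface_weight :: "real \<Rightarrow> real \<Rightarrow> real \<Rightarrow> real \<Rightarrow> real" where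
  "interface_weight a1 b1 \<epsilon> x = (1 - (tanh (sdist a1 b1 x / \<epsilon>))^2) / (2 * \<epsilon>)"

lemma continuous_on_interface_weight:
  "a1 < b1 \<Longrightarrow> \<epsilon> > 0 \<Longrightarrow> continuous_on A (interface_weight a1 b1 \<epsilon>)"
  unfolding interface_weight_def[abs_def] sdist_eq_min
  by (intro continuous_intros) (auto simp: cosh_real_pos[THEN less_imp_neq, THEN not_sym])

lemma interface_weight_bounds:
  "\<epsilon> > 0 \<Longrightarrow> 0 \<le> interface_weight a1 b1 \<epsilon> x"
  "\<epsilon> > 0 \<Longrightarrow> interface_weight a1 b1 \<epsilon> x \<le> 1 / (2 * \<epsilon>)"
  using tanh_square_le_1[of "sdist a1 b1 x / \<epsilon>"] by (auto simp: interface_weight_def divide_right_mono)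

lemma interface_weight_eq_left:
  "a1 < b1 \<Longrightarrow> x \<le> (a1 + b1) / 2 \<Longrightarrow> interface_weight a1 b1 \<epsilon> x = tanh_profile_deriv \<epsilon> a1 x"
  by (simp add: interface_weight_def tanh_profile_deriv_def sdist_eq_min min_def)

lemma interface_weight_eq_right:
  "a1 < b1 \<Longrightarrow> x \<ge> (a1 + b1) / 2 \<Longrightarrow> interface_weight a1 b1 \<epsilon> x = tanh_profile_deriv \<epsilon> b1 x"
proof -
  assume "a1 < b1" "x \<ge> (a1 + b1) / 2"
  then have "sdist a1 b1 x = b1 - x" by (simp add: sdist_eq_min min_def)
  then have "tanh (sdist a1 b1 x / \<epsilon>) = - tanh ((x - b1) / \<epsilon>)"
    using tanh_diff_div_commute[of b1 x \<epsilon>] by simp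
  then show ?thesis
    by (simp add: interface_weight_def tanh_profile_deriv_def)
qed

lemma abs_deriv_phi_eps:
  assumes "a1 < b1" "\<epsilon> > 0" "x \<noteq> (a1 + b1) / 2"
  shows "\<bar>deriv (phi_eps a1 b1 \<epsilon>) x\<bar> = interface_weight a1 b1 \<epsilon> x"
proof (cases "x < (a1 + b1) / 2")
  case True
  have "(phi_eps a1 b1 \<epsilon> has_real_derivative tanh_profile_deriv \<epsilon> a1 x) (at x)"
  proof (rule has_field_derivative_transform_within_open
      [OF tanh_profile_has_derivative[OF assms(2)], where S = "{..<(a1 + b1) / 2}"])
    show "tanh_profile \<epsilon> a1 y = phi_eps a1 b1 \<epsilon> y" if "y \<in> {..<(a1 + b1) / 2}" for y
      using that assms(1) by (simp add: phi_eps_def sdist_eq_min tanh_profile_def min_def)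
  qed (use True in auto)
  then show ?thesis
    using True assms tanh_profile_deriv_nonneg[OF assms(2)]
    by (simp add: DERIV_imp_deriv interface_weight_eq_left)
next
  case False
  then have x: "x > (a1 + b1) / 2" using assms(3) by simp
  have "((\<lambda>y. 1 - tanh_profile \<epsilon> b1 y) has_real_derivative - tanh_profile_deriv \<epsilon> b1 x) (at x)"
    using tanh_profile_has_derivative[OF assms(2)] by (auto intro!: derivative_eq_intros)
  then have "(phi_eps a1 b1 \<epsilon> has_real_derivative - tanh_profile_deriv \<epsilon> b1 x) (at x)"
  proof (rule has_field_derivative_transform_within_open[where S = "{(a1 + b1) / 2<..}"])
    show "1 - tanh_profile \<epsilon> b1 y = phi_eps a1 b1 \<epsilon> y" if "y \<in> {(a1 + b1) / 2<..}" for y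
      using that assms(1)
      by (simp add: phi_eps_def sdist_eq_min tanh_profile_def min_def tanh_diff_div_commute[of b1]
          field_simps)
  qed (use x in auto)
  then show ?thesis
    using x assms tanh_profile_deriv_nonneg[OF assms(2)]
    by (simp add: DERIV_imp_deriv interface_weight_eq_right)
qed

lemma set_integral_interface_weight_split:
  assumes "a < a1" "a1 < b1" "b1 < b" "\<epsilon> > 0"
    and F: "set_integrable lebesgue {a<..<b} (\<lambda>x. F x * interface_weight a1 b1 \<epsilon> x)"
  defines "m \<equiv> (a1 + b1) / 2"
  shows "(\<lambda>x. F x * tanh_profile_deriv \<epsilon> a1 x) integrable_on {a..m}"
    "(\<lambda>x. F x * tanh_profile_deriv \<epsilon> b1 x) integrable_on {m..b}"
    "(LINT x:{a<..<b}|lebesgue. F x * interface_weight a1 b1 \<epsilon> x)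
      = integral {a..m} (\<lambda>x. F x * tanh_profile_deriv \<epsilon> a1 x)
        + integral {m..b} (\<lambda>x. F x * tanh_profile_deriv \<epsilon> b1 x)"
proof -
  let ?g = "\<lambda>x. F x * interface_weight a1 b1 \<epsilon> x"
  have m: "a < m" "m < b" using assms(1-3) by (auto simp: m_def)
  have iL: "set_integrable lebesgue {a<..<m} ?g"
    by (rule set_integrable_subset[OF F]) (use m in auto)
  have iR: "set_integrable lebesgue {m<..<b} ?g"
    by (rule set_integrable_subset[OF F]) (use m in auto)
  have eL: "x \<in> {a<..<m} \<Longrightarrow> ?g x = F x * tanh_profile_deriv \<epsilon> a1 x" for x
    using interface_weight_eq_left[OF assms(2), of x \<epsilon>] by (simp add: m_def)
  have eR: "x \<in> {m<..<b} \<Longrightarrow> ?g x = F x * tanh_profile_deriv \<epsilon> b1 x" for x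
    using interface_weight_eq_right[OF assms(2), of x \<epsilon>] by (simp add: m_def)
  have hL: "(\<lambda>x. F x * tanh_profile_deriv \<epsilon> a1 x) integrable_on {a<..<m}"
    using integrable_cong[of "{a<..<m}" ?g, OF eL] set_lebesgue_integral_eq_integral(1)[OF iL] by simp
  have hR: "(\<lambda>x. F x * tanh_profile_deriv \<epsilon> b1 x) integrable_on {m<..<b}"
    using integrable_cong[of "{m<..<b}" ?g, OF eR] set_lebesgue_integral_eq_integral(1)[OF iR] by simp
  show "(\<lambda>x. F x * tanh_profile_deriv \<epsilon> a1 x) integrable_on {a..m}"
    "(\<lambda>x. F x * tanh_profile_deriv \<epsilon> b1 x) integrable_on {m..b}"
    using hL hR by (simp_all add: integrable_on_open_interval_real)
  have "(LINT x:{a<..<b}|lebesgue. ?g x) = (LINT x:({a<..<m} \<union> {m<..<b})|lebesgue. ?g x)"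
    by (rule set_integral_discrete_difference[where X = "{m}"]) (use m in auto)
  also have "\<dots> = (LINT x:{a<..<m}|lebesgue. ?g x) + (LINT x:{m<..<b}|lebesgue. ?g x)"
    by (rule set_integral_Un[OF _ iL iR]) auto
  also have "\<dots> = integral {a<..<m} ?g + integral {m<..<b} ?g"
    using set_lebesgue_integral_eq_integral(2)[OF iL] set_lebesgue_integral_eq_integral(2)[OF iR] by simp
  also have "integral {a<..<m} ?g = integral {a<..<m} (\<lambda>x. F x * tanh_profile_deriv \<epsilon> a1 x)"
    by (rule integral_cong) (rule eL)
  also have "integral {m<..<b} ?g = integral {m<..<b} (\<lambda>x. F x * tanh_profile_deriv \<epsilon> b1 x)"
    by (rule integral_cong) (rule eR)
  finally show "(LINT x:{a<..<b}|lebesgue. ?g x) = integral {a..m} (\<lambda>x. F x * tanh_profile_deriv \<epsilon> a1 x)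
        + integral {m..b} (\<lambda>x. F x * tanh_profile_deriv \<epsilon> b1 x)"
    by (simp only: integral_open_interval_real)
qed

lemma interface_weight_concentration:
  assumes "a < a1" "a1 < b1" "b1 < b" "\<epsilon> > 0"
    and small: "a + sqrt \<epsilon> \<le> a1" "a1 + sqrt \<epsilon> \<le> (a1 + b1) / 2"
      "(a1 + b1) / 2 + sqrt \<epsilon> \<le> b1" "b1 + sqrt \<epsilon> \<le> b"
    and F: "set_integrable lebesgue {a<..<b} (\<lambda>x. F x * interface_weight a1 b1 \<epsilon> x)"
    and holder: "\<And>x c. x \<in> {a<..<b} \<Longrightarrow> c \<in> {a1, b1} \<Longrightarrow> \<bar>F x - F c\<bar> \<le> C * sqrt \<bar>x - c\<bar>"
    and bound: "\<And>c. c \<in> {a1, b1} \<Longrightarrow> \<bar>F c\<bar> \<le> C"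
  shows "\<bar>(LINT x:{a<..<b}|lebesgue. F x * interface_weight a1 b1 \<epsilon> x) - F a1 - F b1\<bar>
    \<le> C * (concentration_error a a1 ((a1 + b1) / 2) \<epsilon> + concentration_error ((a1 + b1) / 2) b1 b \<epsilon>)"
proof -
  note split = set_integral_interface_weight_split[OF assms(1-4) F]
  have "\<bar>integral {a..(a1 + b1) / 2} (\<lambda>x. F x * tanh_profile_deriv \<epsilon> a1 x) - F a1\<bar>
      \<le> C * concentration_error a a1 ((a1 + b1) / 2) \<epsilon>"
    by (rule tanh_profile_deriv_concentration[OF assms(4) small(1,2) split(1)])
       (use holder bound assms(1-3) in auto)
  moreover have "\<bar>integral {(a1 + b1) / 2..b} (\<lambda>x. F x * tanh_profile_deriv \<epsilon> b1 x) - F b1\<bar>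
      \<le> C * concentration_error ((a1 + b1) / 2) b1 b \<epsilon>"
    by (rule tanh_profile_deriv_concentration[OF assms(4) small(3,4) split(2)])
       (use holder bound assms(1-3) in auto)
  ultimately show ?thesis unfolding split(3) by (simp add: distrib_left)
qed

section \<open>The sharp-interface energy\<close>

definition D0_coef :: "real \<Rightarrow> real \<Rightarrow> real \<Rightarrow> real \<Rightarrow> real \<Rightarrow> real \<Rightarrow> real" where
  "D0_coef a b a1 b1 \<alpha> x = indicator {a1<..<b1} x + \<alpha> * indicator ({a<..<a1} \<union> {b1<..<b}) x"

definition c0_coef :: "real \<Rightarrow> real \<Rightarrow> real \<Rightarrow> real \<Rightarrow> real \<Rightarrow> real \<Rightarrow> real \<Rightarrow> real" where
  "c0_coef a b a1 b1 \<beta> \<gamma> x = \<gamma> * indicator {a1<..<b1} x + \<beta> * indicator ({a<..<a1} \<union> {b1<..<b}) x"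

definition f0_rhs :: "real \<Rightarrow> real \<Rightarrow> real \<Rightarrow> real \<Rightarrow> (real \<Rightarrow> real) \<Rightarrow> (real \<Rightarrow> real) \<Rightarrow> real \<Rightarrow> real" where
  "f0_rhs a b a1 b1 h q x = q x * indicator {a1<..<b1} x + h x * indicator ({a<..<a1} \<union> {b1<..<b}) x"

lemma E0_eq:
  assumes "a1 \<noteq> b1"
  shows "E0 a b a1 b1 \<alpha> \<beta> \<gamma> \<kappa> h q g u du =
    (LINT x:{a<..<b}|lebesgue. (1/2) * (D0_coef a b a1 b1 \<alpha> x * (du x)^2 + c0_coef a b a1 b1 \<beta> \<gamma> x * (u x)^2)
       - f0_rhs a b a1 b1 h q x * u x)
    + ((1/2) * \<kappa> * (u a1)^2 + g a1 * u a1) + ((1/2) * \<kappa> * (u b1)^2 + g b1 * u b1)"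
  using assms by (simp add: E0_def Let_def D0_coef_def c0_coef_def f0_rhs_def)

lemma D0_coef_measurable: "D0_coef a b a1 b1 \<alpha> \<in> borel_measurable borel"
  unfolding D0_coef_def[abs_def] by measurable

lemma D0_coef_bound: "\<alpha> > 0 \<Longrightarrow> \<bar>D0_coef a b a1 b1 \<alpha> x\<bar> \<le> 1 + \<alpha>"
  unfolding D0_coef_def by (simp split: split_indicator)

lemma c0_coef_measurable: "c0_coef a b a1 b1 \<beta> \<gamma> \<in> borel_measurable borel"
  unfolding c0_coef_def[abs_def] by measurable

lemma c0_coef_bound: "\<beta> > 0 \<Longrightarrow> \<gamma> > 0 \<Longrightarrow> \<bar>c0_coef a b a1 b1 \<beta> \<gamma> x\<bar> \<le> \<gamma> + \<beta>"
  unfolding c0_coef_def by (simp split: split_indicator)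

lemma L2_f0_rhs:
  assumes "L2 a b h" "L2 a b q"
  shows "L2 a b (f0_rhs a b a1 b1 h q)"
proof -
  have "L2 a b (\<lambda>x. indicator {a1<..<b1} x * q x + indicator ({a<..<a1} \<union> {b1<..<b}) x * h x)"
    using assms by (intro L2_add L2_mult_bounded_borel[where B = 1]) (auto simp: indicator_def)
  then show ?thesis unfolding f0_rhs_def[abs_def] by (simp add: mult.commute)
qed

lemma set_integral_quadratic_expand:
  assumes u: "L2 a b u" "L2 a b du" and z: "L2 a b z" "L2 a b dz" and f: "L2 a b f"
    and D: "D \<in> borel_measurable borel" "\<And>x. x \<in> {a<..<b} \<Longrightarrow> \<bar>D x\<bar> \<le> BD"
    and c: "c \<in> borel_measurable borel" "\<And>x. x \<in> {a<..<b} \<Longrightarrow> \<bar>c x\<bar> \<le> BC"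
  shows "(LINT x:{a<..<b}|lebesgue. (1/2) * (D x * (du x + t * dz x)^2 + c x * (u x + t * z x)^2)
      - f x * (u x + t * z x))
    = (LINT x:{a<..<b}|lebesgue. (1/2) * (D x * (du x)^2 + c x * (u x)^2) - f x * u x)
      + t * (LINT x:{a<..<b}|lebesgue. D x * du x * dz x + c x * u x * z x - f x * z x)
      + t^2 * (LINT x:{a<..<b}|lebesgue. (1/2) * (D x * (dz x)^2 + c x * (z x)^2))"
proof -
  have iA: "set_integrable lebesgue {a<..<b} (\<lambda>x. (1/2) * (D x * (du x)^2 + c x * (u x)^2) - f x * u x)"
    by (intro set_integral_diff(1) set_integrable_mult_right set_integral_add(1) L2_integrable_mult f u
        L2_integrable_weighted_square[OF u(2) D] L2_integrable_weighted_square[OF u(1) c])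
  have iB: "set_integrable lebesgue {a<..<b} (\<lambda>x. D x * du x * dz x + c x * u x * z x - f x * z x)"
    by (intro set_integral_diff(1) set_integral_add(1) L2_integrable_mult f z
        L2_integrable_weighted_mult[OF u(2) z(2) D] L2_integrable_weighted_mult[OF u(1) z(1) c])
  have iC: "set_integrable lebesgue {a<..<b} (\<lambda>x. (1/2) * (D x * (dz x)^2 + c x * (z x)^2))"
    by (intro set_integrable_mult_right set_integral_add(1)
        L2_integrable_weighted_square[OF z(2) D] L2_integrable_weighted_square[OF z(1) c])
  have "(\<lambda>x. (1/2) * (D x * (du x + t * dz x)^2 + c x * (u x + t * z x)^2) - f x * (u x + t * z x))
    = (\<lambda>x. ((1/2) * (D x * (du x)^2 + c x * (u x)^2) - f x * u x)
      + t * (D x * du x * dz x + c x * u x * z x - f x * z x)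
      + t^2 * ((1/2) * (D x * (dz x)^2 + c x * (z x)^2)))"
    by (rule ext) (simp add: algebra_simps power2_eq_square)
  then show ?thesis
    by (simp only: set_integral_add(2)[OF set_integral_add(1)[OF iA set_integrable_mult_right[OF iB]]
          set_integrable_mult_right[OF iC]]
        set_integral_add(2)[OF iA set_integrable_mult_right[OF iB]] set_integral_mult_right)
qed

lemma linear_coeff_eq_0_if_quadratic_nonneg:
  fixes L Q :: real
  assumes "\<And>t. 0 \<le> t * L + t^2 * Q"
  shows "L = 0"
proof (rule ccontr)
  assume "L \<noteq> 0"
  define R where "R = \<bar>Q\<bar> + 1"
  have R: "R > 0" "Q \<le> R" by (auto simp: R_def)
  define t where "t = - L / (2 * R)"
  have "t * L + t^2 * Q \<le> t * L + t^2 * R"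
    using R by (intro add_left_mono mult_left_mono) auto
  also have "\<dots> = - (L * L) / (4 * R)"
    using R by (simp add: t_def power2_eq_square field_simps)
  also have "\<dots> < 0"
    using \<open>L \<noteq> 0\<close> R by (intro divide_neg_pos) (auto simp: not_square_less_zero zero_less_mult_iff)
  finally show False using assms[of t] by simp
qed

lemma young_mult_le: "(m :: real) > 0 \<Longrightarrow> x * y \<le> x^2 / m + m * y^2 / 4"
proof -
  assume m: "m > 0"
  have "0 \<le> (2 * x - m * y)^2 / (4 * m)" using m by simp
  also have "\<dots> = x^2 / m + m * y^2 / 4 - x * y"
    using m by (simp add: power2_eq_square field_simps)
  finally show ?thesis by simp
qed

lemma coercive_pointwise_bound:
  fixes m D C K w dw r f A B du u :: real
  assumes "m > 0" "m \<le> D" "m \<le> C" "0 \<le> K"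
  shows "m / 2 * w^2 + 3 * m / 4 * dw^2 - (r^2 * f^2 + A^2 * (r^2 * du^2) + B^2 * (r^2 * u^2)) / m
    \<le> D * dw^2 + C * w^2 + K * w^2 - r * (f * w - A * du * dw - B * u * w)"
proof -
  have "r * (f * w - A * du * dw - B * u * w) = (r * f) * w + (- r * A * du) * dw + (- r * B * u) * w"
    by (simp add: algebra_simps)
  also have "\<dots> \<le> ((r * f)^2 / m + m * w^2 / 4) + ((- r * A * du)^2 / m + m * dw^2 / 4)
      + ((- r * B * u)^2 / m + m * w^2 / 4)"
    using assms(1) by (intro add_mono young_mult_le)
  also have "\<dots> = (r^2 * f^2 + A^2 * (r^2 * du^2) + B^2 * (r^2 * u^2)) / m + m / 4 * (2 * w^2 + dw^2)"
    by (simp add: power_mult_distrib add_divide_distrib algebra_simps)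
  finally have "r * (f * w - A * du * dw - B * u * w)
      \<le> (r^2 * f^2 + A^2 * (r^2 * du^2) + B^2 * (r^2 * u^2)) / m + m / 4 * (2 * w^2 + dw^2)" .
  moreover have "m * dw^2 \<le> D * dw^2" "m * w^2 \<le> C * w^2" "0 \<le> K * w^2"
    using assms by (auto intro: mult_right_mono)
  ultimately show ?thesis by (simp add: field_simps)
qed

locale sharp_interface_problem =
  fixes a b a1 b1 \<alpha> \<beta> \<gamma> \<kappa> :: real and h q g dg u0 du0 :: "real \<Rightarrow> real"
  assumes ord: "a < a1" "a1 < b1" "b1 < b"
    and pos: "\<alpha> > 0" "\<beta> > 0" "\<gamma> > 0" "\<kappa> \<ge> 0"
    and hL2: "L2 a b h" and qL2: "L2 a b q"
    and gH1: "H1 a b g dg"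
    and u0H1: "H1 a b u0 du0"
    and u0min: "\<And>v dv. H1 a b v dv \<Longrightarrow>
      E0 a b a1 b1 \<alpha> \<beta> \<gamma> \<kappa> h q g u0 du0 \<le> E0 a b a1 b1 \<alpha> \<beta> \<gamma> \<kappa> h q g v dv"
begin

definition flux :: "real \<Rightarrow> real" where
  "flux x = g x + \<kappa> * u0 x"

lemma H1_flux: "H1 a b flux (\<lambda>x. dg x + \<kappa> * du0 x)"
  unfolding flux_def[abs_def] by (rule H1_add_scaled[OF gH1 u0H1])

lemma euler_lagrange:
  assumes z: "H1 a b z dz"
  shows "(LINT x:{a<..<b}|lebesgue. D0_coef a b a1 b1 \<alpha> x * du0 x * dz x
      + c0_coef a b a1 b1 \<beta> \<gamma> x * u0 x * z x - f0_rhs a b a1 b1 h q x * z x)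
    + flux a1 * z a1 + flux b1 * z b1 = 0"
proof (rule linear_coeff_eq_0_if_quadratic_nonneg)
  let ?D = "D0_coef a b a1 b1 \<alpha>" and ?c = "c0_coef a b a1 b1 \<beta> \<gamma>"
  fix t
  have L2: "L2 a b u0" "L2 a b du0" "L2 a b z" "L2 a b dz" using u0H1 z by (auto simp: H1_def)
  have "E0 a b a1 b1 \<alpha> \<beta> \<gamma> \<kappa> h q g u0 du0
      \<le> E0 a b a1 b1 \<alpha> \<beta> \<gamma> \<kappa> h q g (\<lambda>x. u0 x + t * z x) (\<lambda>x. du0 x + t * dz x)"
    by (rule u0min[OF H1_add_scaled[OF u0H1 z]])
  also have "\<dots> = E0 a b a1 b1 \<alpha> \<beta> \<gamma> \<kappa> h q g u0 du0
      + t * ((LINT x:{a<..<b}|lebesgue. ?D x * du0 x * dz x + ?c x * u0 x * z x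
          - f0_rhs a b a1 b1 h q x * z x) + flux a1 * z a1 + flux b1 * z b1)
      + t^2 * ((LINT x:{a<..<b}|lebesgue. (1/2) * (?D x * (dz x)^2 + ?c x * (z x)^2))
          + (1/2) * \<kappa> * ((z a1)^2 + (z b1)^2))"
    using ord
    unfolding E0_eq[OF less_imp_neq[OF ord(2)]]
      set_integral_quadratic_expand[OF L2 L2_f0_rhs[OF hL2 qL2] D0_coef_measurable
        D0_coef_bound[OF pos(1)] c0_coef_measurable c0_coef_bound[OF pos(2,3)]]
    by (simp add: flux_def algebra_simps power2_eq_square)
  finally show "0 \<le> t * ((LINT x:{a<..<b}|lebesgue. ?D x * du0 x * dz x + ?c x * u0 x * z x
          - f0_rhs a b a1 b1 h q x * z x) + flux a1 * z a1 + flux b1 * z b1)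
      + t^2 * ((LINT x:{a<..<b}|lebesgue. (1/2) * (?D x * (dz x)^2 + ?c x * (z x)^2))
          + (1/2) * \<kappa> * ((z a1)^2 + (z b1)^2))"
    by simp
qed

definition coercivity_const :: real where
  "coercivity_const = min (min \<alpha> 1) (min \<beta> \<gamma>)"

lemma coercivity_const_pos: "coercivity_const > 0"
  using pos by (simp add: coercivity_const_def)

lemma coercivity_const_le:
  assumes "0 \<le> p" "p \<le> 1"
  shows "coercivity_const \<le> \<alpha> + (1 - \<alpha>) * p" "coercivity_const \<le> \<beta> + (\<gamma> - \<beta>) * p"
proof -
  have "coercivity_const * (1 - p) + coercivity_const * p \<le> \<alpha> * (1 - p) + 1 * p"
    "coercivity_const * (1 - p) + coercivity_const * p \<le> \<beta> * (1 - p) + \<gamma> * p"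
    using assms by (intro add_mono mult_right_mono; simp add: coercivity_const_def)+
  then show "coercivity_const \<le> \<alpha> + (1 - \<alpha>) * p" "coercivity_const \<le> \<beta> + (\<gamma> - \<beta>) * p"
    by (simp_all add: algebra_simps)
qed

definition defect_energy :: "real \<Rightarrow> real" where
  "defect_energy \<epsilon> = (LINT x:{a<..<b}|lebesgue. (phi_eps a1 b1 \<epsilon> x - indicator {a1<..<b1} x)^2
     * ((q x - h x)^2 + (1 - \<alpha>)^2 * (du0 x)^2 + (\<gamma> - \<beta>)^2 * (u0 x)^2))"

definition flux_const :: real where
  "flux_const = (sqrt (LINT x:{a<..<b}|lebesgue. (dg x + \<kappa> * du0 x)^2) + \<bar>flux a1\<bar> + \<bar>flux b1\<bar>)
     * (sqrt (sobolev_const a b) + 1)"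

lemma flux_const_ge:
  assumes "c \<in> {a1, b1}"
  shows "sqrt (LINT x:{a<..<b}|lebesgue. (dg x + \<kappa> * du0 x)^2) * sqrt (sobolev_const a b) + \<bar>flux c\<bar>
      \<le> flux_const"
    "sqrt (sobolev_const a b) * \<bar>flux c\<bar> \<le> flux_const"
proof -
  let ?Np = "LINT x:{a<..<b}|lebesgue. (dg x + \<kappa> * du0 x)^2" and ?K = "sobolev_const a b"
  have "0 \<le> ?K" using ord by (simp add: sobolev_const_def le_max_iff_disj)
  have "flux_const = sqrt ?Np * sqrt ?K + sqrt ?Np + sqrt ?K * \<bar>flux a1\<bar> + sqrt ?K * \<bar>flux b1\<bar>
      + \<bar>flux a1\<bar> + \<bar>flux b1\<bar>"
    by (simp add: flux_const_def algebra_simps)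
  moreover have "\<bar>flux c\<bar> \<le> \<bar>flux a1\<bar> + \<bar>flux b1\<bar>" using assms by auto
  moreover have "sqrt ?K * \<bar>flux c\<bar> \<le> sqrt ?K * \<bar>flux a1\<bar> + sqrt ?K * \<bar>flux b1\<bar>"
    using assms \<open>0 \<le> ?K\<close> by auto
  moreover have "0 \<le> sqrt ?Np" "0 \<le> sqrt ?Np * sqrt ?K"
    "0 \<le> sqrt ?K * \<bar>flux a1\<bar>" "0 \<le> sqrt ?K * \<bar>flux b1\<bar>"
    using \<open>0 \<le> ?K\<close> set_integral_square_nonneg[where A = "{a<..<b}" and f = "\<lambda>x. dg x + \<kappa> * du0 x"]
    by auto
  ultimately show "sqrt ?Np * sqrt ?K + \<bar>flux c\<bar> \<le> flux_const" "sqrt ?K * \<bar>flux c\<bar> \<le> flux_const"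
    by linarith+
qed

lemma flux_mult_holder_half:
  assumes "H1 a b z dz" "x \<in> {a<..<b}" "c \<in> {a1, b1}"
  shows "\<bar>flux x * z x - flux c * z c\<bar> \<le> sqrt (H1_norm_sq a b z dz) * flux_const * sqrt \<bar>x - c\<bar>"
proof -
  have c: "c \<in> {a<..<b}" using assms(3) ord by auto
  have "sqrt (H1_norm_sq a b z dz)
        * (sqrt (LINT x:{a<..<b}|lebesgue. (dg x + \<kappa> * du0 x)^2) * sqrt (sobolev_const a b) + \<bar>flux c\<bar>)
        * sqrt \<bar>x - c\<bar>
      \<le> sqrt (H1_norm_sq a b z dz) * flux_const * sqrt \<bar>x - c\<bar>"
    using flux_const_ge(1)[OF assms(3)] H1_norm_sq_nonneg by (intro mult_right_mono mult_left_mono) auto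
  with H1_mult_holder_half[OF H1_flux assms(1,2) c] show ?thesis by linarith
qed

lemma flux_mult_abs_bound:
  assumes "H1 a b z dz" "c \<in> {a1, b1}"
  shows "\<bar>flux c * z c\<bar> \<le> sqrt (H1_norm_sq a b z dz) * flux_const"
proof -
  have "\<bar>flux c * z c\<bar> \<le> \<bar>flux c\<bar> * (sqrt (sobolev_const a b) * sqrt (H1_norm_sq a b z dz))"
    using H1_abs_bound[OF assms(1), of c] assms(2) ord by (auto simp: abs_mult intro: mult_left_mono)
  also have "\<dots> = sqrt (H1_norm_sq a b z dz) * (sqrt (sobolev_const a b) * \<bar>flux c\<bar>)"
    by (simp add: mult_ac)
  also have "\<dots> \<le> sqrt (H1_norm_sq a b z dz) * flux_const"
    using flux_const_ge(2)[OF assms(2)] H1_norm_sq_nonneg by (intro mult_left_mono) auto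
  finally show ?thesis .
qed

definition boundary_error :: "real \<Rightarrow> real" where
  "boundary_error \<epsilon> = flux_const
     * (concentration_error a a1 ((a1 + b1) / 2) \<epsilon> + concentration_error ((a1 + b1) / 2) b1 b \<epsilon>)"

definition energy_bound :: "real \<Rightarrow> real" where
  "energy_bound \<epsilon> = (defect_energy \<epsilon> + (boundary_error \<epsilon>)^2) / coercivity_const"

lemma energy_bound_tendsto_0:
  assumes "\<And>k. e k > 0" "e \<longlonglongrightarrow> 0"
  shows "(\<lambda>k. energy_bound (e k)) \<longlonglongrightarrow> 0"
proof -
  have L2: "L2 a b u0" "L2 a b du0" "L2 a b (\<lambda>x. q x - h x)"
    using u0H1 qL2 hL2 by (auto simp: H1_def intro: L2_diff)
  have "set_integrable lebesgue {a<..<b}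
      (\<lambda>x. (q x - h x)^2 + (1 - \<alpha>)^2 * (du0 x)^2 + (\<gamma> - \<beta>)^2 * (u0 x)^2)"
    using L2 by (intro set_integral_add set_integrable_mult_right) (auto simp: L2_def)
  then have defect: "(\<lambda>k. defect_energy (e k)) \<longlonglongrightarrow> 0"
    unfolding defect_energy_def using ord(2) assms by (intro phi_eps_defect_integral_tendsto_0)
  have "((\<lambda>\<epsilon>. concentration_error a a1 ((a1 + b1) / 2) \<epsilon>
      + concentration_error ((a1 + b1) / 2) b1 b \<epsilon>) \<longlongrightarrow> 0 + 0) (at_right 0)"
    by (intro tendsto_add concentration_error_tendsto_0) (use ord in auto)
  then have "(boundary_error \<longlongrightarrow> 0) (at_right 0)"
    unfolding boundary_error_def[abs_def] using tendsto_mult_left by fastforce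
  moreover have "filterlim e (at_right 0) sequentially"
    using assms by (intro tendsto_imp_filterlim_at_right) auto
  ultimately have "(\<lambda>k. boundary_error (e k)) \<longlonglongrightarrow> 0"
    by (rule filterlim_compose)
  with defect have "(\<lambda>k. energy_bound (e k)) \<longlonglongrightarrow> (0 + 0^2) / coercivity_const"
    unfolding energy_bound_def by (intro tendsto_intros) (use coercivity_const_pos in auto)
  then show ?thesis by simp
qed

section \<open>The error estimate for the diffuse problem\<close>

context
  fixes \<epsilon> :: real and ue due :: "real \<Rightarrow> real"
  assumes eps: "\<epsilon> > 0" and ueH1: "H1 a b ue due"
    and ue_weak: "\<And>v dv. H1 a b v dv \<Longrightarrow>
      (LINT x:{a<..<b}|lebesgue.
          (\<alpha> + (1 - \<alpha>) * phi_eps a1 b1 \<epsilon> x) * due x * dv x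
        + (\<beta> + (\<gamma> - \<beta>) * phi_eps a1 b1 \<epsilon> x) * ue x * v x
        + (\<kappa> * ue x + g x) * \<bar>deriv (phi_eps a1 b1 \<epsilon>) x\<bar> * v x)
      = (LINT x:{a<..<b}|lebesgue. (h x + (q x - h x) * phi_eps a1 b1 \<epsilon> x) * v x)"
begin

abbreviation (input) P :: "real \<Rightarrow> real" where "P \<equiv> phi_eps a1 b1 \<epsilon>"
abbreviation (input) W :: "real \<Rightarrow> real" where "W \<equiv> interface_weight a1 b1 \<epsilon>"
abbreviation (input) \<rho> :: "real \<Rightarrow> real" where "\<rho> x \<equiv> phi_eps a1 b1 \<epsilon> x - indicator {a1<..<b1} x"
abbreviation (input) w :: "real \<Rightarrow> real" where "w x \<equiv> ue x - u0 x"
abbreviation (input) dw :: "real \<Rightarrow> real" where "dw x \<equiv> due x - du0 x"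

lemma H1_error: "H1 a b w dw"
  using H1_add_scaled[OF ueH1 u0H1, of "-1"] by simp

lemma L2_data: "L2 a b ue" "L2 a b due" "L2 a b u0" "L2 a b du0" "L2 a b w" "L2 a b dw" "L2 a b g"
  "L2 a b flux" "L2 a b (\<lambda>x. q x - h x)"
  using ueH1 u0H1 H1_error gH1 H1_flux qL2 hL2 by (auto simp: H1_def intro: L2_diff)

lemma coefficient_measurable:
  "P \<in> borel_measurable borel" "W \<in> borel_measurable borel" "\<rho> \<in> borel_measurable borel"
  "(\<lambda>x. \<alpha> + (1 - \<alpha>) * P x) \<in> borel_measurable borel" "(\<lambda>x. \<beta> + (\<gamma> - \<beta>) * P x) \<in> borel_measurable borel"
proof -
  show P: "P \<in> borel_measurable borel"
    using continuous_on_phi_eps[OF ord(2) eps] by (rule borel_measurable_continuous_onI)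
  show "W \<in> borel_measurable borel"
    using continuous_on_interface_weight[OF ord(2) eps] by (rule borel_measurable_continuous_onI)
  show "\<rho> \<in> borel_measurable borel" "(\<lambda>x. \<alpha> + (1 - \<alpha>) * P x) \<in> borel_measurable borel"
    "(\<lambda>x. \<beta> + (\<gamma> - \<beta>) * P x) \<in> borel_measurable borel"
    using P by auto
qed

lemma coefficient_bounds:
  "\<bar>\<alpha> + (1 - \<alpha>) * P x\<bar> \<le> \<bar>\<alpha>\<bar> + \<bar>1 - \<alpha>\<bar>" "\<bar>\<beta> + (\<gamma> - \<beta>) * P x\<bar> \<le> \<bar>\<beta>\<bar> + \<bar>\<gamma> - \<beta>\<bar>"
  "\<bar>\<rho> x\<bar> \<le> 1" "\<bar>W x\<bar> \<le> 1 / (2 * \<epsilon>)"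
  using phi_eps_bounds[of a1 b1 \<epsilon> x] interface_weight_bounds[OF eps, of a1 b1 x]
  by (auto simp: abs_mult indicator_def intro!: order.trans[OF abs_triangle_ineq] mult_left_le)

lemma integrable_energy_identity:
  "set_integrable lebesgue {a<..<b} (\<lambda>x. (\<alpha> + (1 - \<alpha>) * P x) * (dw x)^2 + (\<beta> + (\<gamma> - \<beta>) * P x) * (w x)^2
      + \<kappa> * W x * (w x)^2
      - \<rho> x * ((q x - h x) * w x - (1 - \<alpha>) * du0 x * dw x - (\<gamma> - \<beta>) * u0 x * w x))"
proof -
  have "set_integrable lebesgue {a<..<b} (\<lambda>x. (\<alpha> + (1 - \<alpha>) * P x) * (dw x)^2
      + (\<beta> + (\<gamma> - \<beta>) * P x) * (w x)^2 + \<kappa> * (W x * (w x)^2)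
      - (\<rho> x * (q x - h x) * w x - (1 - \<alpha>) * (\<rho> x * du0 x * dw x) - (\<gamma> - \<beta>) * (\<rho> x * u0 x * w x)))"
    using L2_data coefficient_measurable
    by (intro set_integral_diff(1) set_integral_add(1) set_integrable_mult_right
        L2_integrable_weighted_square[OF _ _ coefficient_bounds(1)]
        L2_integrable_weighted_square[OF _ _ coefficient_bounds(2)]
        L2_integrable_weighted_square[OF _ _ coefficient_bounds(4)]
        L2_integrable_weighted_mult[OF _ _ _ coefficient_bounds(3)]) auto
  then show ?thesis
    by (simp add: algebra_simps)
qed

lemma weak_equation_error:
  "(LINT x:{a<..<b}|lebesgue. (\<alpha> + (1 - \<alpha>) * P x) * due x * dw x + (\<beta> + (\<gamma> - \<beta>) * P x) * ue x * w x
      + W x * (\<kappa> * ue x + g x) * w x)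
    = (LINT x:{a<..<b}|lebesgue. (h x + P x * (q x - h x)) * w x)"
proof -
  have "(LINT x:{a<..<b}|lebesgue. (\<alpha> + (1 - \<alpha>) * P x) * due x * dw x + (\<beta> + (\<gamma> - \<beta>) * P x) * ue x * w x
      + W x * (\<kappa> * ue x + g x) * w x)
    = (LINT x:{a<..<b}|lebesgue. (\<alpha> + (1 - \<alpha>) * P x) * due x * dw x + (\<beta> + (\<gamma> - \<beta>) * P x) * ue x * w x
      + (\<kappa> * ue x + g x) * \<bar>deriv P x\<bar> * w x)"
    unfolding set_lebesgue_integral_def
    by (rule integral_discrete_difference[where X = "{(a1 + b1) / 2}"])
       (auto simp: abs_deriv_phi_eps[OF ord(2) eps] mult_ac)
  then show ?thesis
    unfolding ue_weak[OF H1_error] by (simp add: mult_ac)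
qed

lemma integrable_tested_equations:
  "set_integrable lebesgue {a<..<b} (\<lambda>x. (\<alpha> + (1 - \<alpha>) * P x) * due x * dw x
      + (\<beta> + (\<gamma> - \<beta>) * P x) * ue x * w x + W x * (\<kappa> * ue x + g x) * w x)"
  "set_integrable lebesgue {a<..<b} (\<lambda>x. (h x + P x * (q x - h x)) * w x)"
  "set_integrable lebesgue {a<..<b} (\<lambda>x. D0_coef a b a1 b1 \<alpha> x * du0 x * dw x
      + c0_coef a b a1 b1 \<beta> \<gamma> x * u0 x * w x - f0_rhs a b a1 b1 h q x * w x)"
  "set_integrable lebesgue {a<..<b} (\<lambda>x. W x * flux x * w x)"
proof -
  note int = L2_integrable_weighted_mult[OF _ _ _ coefficient_bounds(1)]
    L2_integrable_weighted_mult[OF _ _ _ coefficient_bounds(2)]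
    L2_integrable_weighted_mult[OF _ _ _ coefficient_bounds(4)]
  show "set_integrable lebesgue {a<..<b} (\<lambda>x. (\<alpha> + (1 - \<alpha>) * P x) * due x * dw x
      + (\<beta> + (\<gamma> - \<beta>) * P x) * ue x * w x + W x * (\<kappa> * ue x + g x) * w x)"
    "set_integrable lebesgue {a<..<b} (\<lambda>x. W x * flux x * w x)"
    using L2_data coefficient_measurable by (intro set_integral_add(1) int L2_add L2_cmult; simp)+
  have "\<bar>P x\<bar> \<le> 1" for x using phi_eps_bounds[of a1 b1 \<epsilon> x] by simp
  then show "set_integrable lebesgue {a<..<b} (\<lambda>x. (h x + P x * (q x - h x)) * w x)"
    using L2_data hL2 coefficient_measurable(1)
    by (intro L2_integrable_mult L2_add L2_mult_bounded_borel) auto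
  show "set_integrable lebesgue {a<..<b} (\<lambda>x. D0_coef a b a1 b1 \<alpha> x * du0 x * dw x
      + c0_coef a b a1 b1 \<beta> \<gamma> x * u0 x * w x - f0_rhs a b a1 b1 h q x * w x)"
    using L2_data L2_f0_rhs[OF hL2 qL2] D0_coef_measurable c0_coef_measurable pos
    by (intro set_integral_diff(1) set_integral_add(1) L2_integrable_mult
        L2_integrable_weighted_mult[OF _ _ _ D0_coef_bound] L2_integrable_weighted_mult[OF _ _ _ c0_coef_bound])
      auto
qed

text \<open>The difference of the two tested equations: the coefficient jumps leave the defect \<open>\<rho>\<close>,
  the interface term leaves the weight \<open>W\<close>.\<close>
lemma energy_identity:
  "(LINT x:{a<..<b}|lebesgue. (\<alpha> + (1 - \<alpha>) * P x) * (dw x)^2 + (\<beta> + (\<gamma> - \<beta>) * P x) * (w x)^2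
      + \<kappa> * W x * (w x)^2
      - \<rho> x * ((q x - h x) * w x - (1 - \<alpha>) * du0 x * dw x - (\<gamma> - \<beta>) * u0 x * w x))
    = flux a1 * w a1 + flux b1 * w b1 - (LINT x:{a<..<b}|lebesgue. W x * flux x * w x)"
  (is "(LINT x:{a<..<b}|lebesgue. ?GR x) = _")
proof -
  let ?I = "{a<..<b}"
  define U where "U x = (\<alpha> + (1 - \<alpha>) * P x) * due x * dw x + (\<beta> + (\<gamma> - \<beta>) * P x) * ue x * w x
    + W x * (\<kappa> * ue x + g x) * w x" for x
  define F where "F x = (h x + P x * (q x - h x)) * w x" for x
  define E where "E x = D0_coef a b a1 b1 \<alpha> x * du0 x * dw x + c0_coef a b a1 b1 \<beta> \<gamma> x * u0 x * w x
    - f0_rhs a b a1 b1 h q x * w x" for x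
  define Y where "Y x = W x * flux x * w x" for x
  note int = integrable_tested_equations[folded U_def F_def E_def Y_def]
  have "(LINT x:?I|lebesgue. ?GR x + Y x) = (LINT x:?I|lebesgue. U x - F x - E x)"
    unfolding set_lebesgue_integral_def
  proof (rule integral_discrete_difference[where X = "{a1, b1}"])
    fix x assume x: "x \<notin> {a1, b1}"
    show "indicator ?I x *\<^sub>R (?GR x + Y x) = indicator ?I x *\<^sub>R (U x - F x - E x)"
    proof (cases "x \<in> ?I")
      case True
      then have "indicator ({a<..<a1} \<union> {b1<..<b}) x = (1 - indicator {a1<..<b1} x :: real)"
        using x by (auto simp: indicator_def)
      then have "?GR x + Y x = U x - F x - E x"
        unfolding U_def F_def E_def Y_def D0_coef_def c0_coef_def f0_rhs_def flux_def
        by (simp only:) (simp add: algebra_simps power2_eq_square)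
      then show ?thesis by simp
    qed simp
  qed auto
  moreover have "(LINT x:?I|lebesgue. E x) + flux a1 * w a1 + flux b1 * w b1 = 0"
    unfolding E_def by (rule euler_lagrange[OF H1_error])
  ultimately show ?thesis
    using weak_equation_error[folded U_def F_def] set_integral_add(2)[OF integrable_energy_identity int(4)]
      set_integral_diff(2)[OF set_integral_diff(1)[OF int(1,2)] int(3)] set_integral_diff(2)[OF int(1,2)]
    by (simp add: Y_def)
qed

lemma boundary_term_estimate:
  assumes small: "a + sqrt \<epsilon> \<le> a1" "a1 + sqrt \<epsilon> \<le> (a1 + b1) / 2"
    "(a1 + b1) / 2 + sqrt \<epsilon> \<le> b1" "b1 + sqrt \<epsilon> \<le> b"
  shows "\<bar>flux a1 * w a1 + flux b1 * w b1 - (LINT x:{a<..<b}|lebesgue. W x * flux x * w x)\<bar>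
    \<le> sqrt (H1_norm_sq a b w dw) * boundary_error \<epsilon>"
proof -
  have "set_integrable lebesgue {a<..<b} (\<lambda>x. W x * flux x * w x)"
    using L2_data coefficient_measurable by (intro L2_integrable_weighted_mult[OF _ _ _ coefficient_bounds(4)])
  then have "set_integrable lebesgue {a<..<b} (\<lambda>x. flux x * w x * W x)"
    by (simp add: mult_ac)
  from interface_weight_concentration[OF ord eps small this
      flux_mult_holder_half[OF H1_error] flux_mult_abs_bound[OF H1_error]]
  show ?thesis
    by (simp add: boundary_error_def abs_minus_commute mult_ac)
qed

lemma coercive_lower_bound:
  "coercivity_const / 2 * (LINT x:{a<..<b}|lebesgue. (w x)^2)
      + 3 * coercivity_const / 4 * (LINT x:{a<..<b}|lebesgue. (dw x)^2) - defect_energy \<epsilon> / coercivity_const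
    \<le> (LINT x:{a<..<b}|lebesgue. (\<alpha> + (1 - \<alpha>) * P x) * (dw x)^2 + (\<beta> + (\<gamma> - \<beta>) * P x) * (w x)^2
      + \<kappa> * W x * (w x)^2
      - \<rho> x * ((q x - h x) * w x - (1 - \<alpha>) * du0 x * dw x - (\<gamma> - \<beta>) * u0 x * w x))"
proof -
  let ?I = "{a<..<b}" and ?m = coercivity_const
    and ?Nw = "LINT x:{a<..<b}|lebesgue. (w x)^2" and ?Nd = "LINT x:{a<..<b}|lebesgue. (dw x)^2"
  have m: "?m > 0" by (rule coercivity_const_pos)
  define E where "E x = (\<rho> x)^2 * ((q x - h x)^2 + (1 - \<alpha>)^2 * (du0 x)^2 + (\<gamma> - \<beta>)^2 * (u0 x)^2)" for x
  have sq: "set_integrable lebesgue ?I (\<lambda>x. (w x)^2)" "set_integrable lebesgue ?I (\<lambda>x. (dw x)^2)"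
    using L2_data by (auto simp: L2_def)
  have "(\<lambda>x. (\<rho> x)^2) \<in> borel_measurable borel" using coefficient_measurable(1) by simp
  moreover have "\<bar>(\<rho> x)^2\<bar> \<le> 1" for x
    using phi_eps_bounds[of a1 b1 \<epsilon> x] by (auto simp: indicator_def abs_square_le_1)
  ultimately have iE: "set_integrable lebesgue ?I E"
    unfolding E_def distrib_left using L2_data
    by (intro set_integral_add(1)) (auto simp: mult.left_commute[of "(\<rho> _)^2"]
        intro!: set_integrable_mult_right L2_integrable_weighted_square)
  have "?m / 2 * ?Nw + 3 * ?m / 4 * ?Nd - defect_energy \<epsilon> / ?m
      = (LINT x:?I|lebesgue. ?m / 2 * (w x)^2 + 3 * ?m / 4 * (dw x)^2 - E x / ?m)"
    using set_integral_diff(2)[OF set_integral_add(1) iE[THEN set_integrable_divide]]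
      set_integral_add(2) sq
    by (simp add: set_integral_mult_right set_integrable_mult_right set_integral_divide_zero
        defect_energy_def E_def)
  also have "\<dots> \<le> (LINT x:?I|lebesgue. (\<alpha> + (1 - \<alpha>) * P x) * (dw x)^2 + (\<beta> + (\<gamma> - \<beta>) * P x) * (w x)^2
      + \<kappa> * W x * (w x)^2
      - \<rho> x * ((q x - h x) * w x - (1 - \<alpha>) * du0 x * dw x - (\<gamma> - \<beta>) * u0 x * w x))"
  proof (rule set_integral_mono)
    show "set_integrable lebesgue ?I (\<lambda>x. ?m / 2 * (w x)^2 + 3 * ?m / 4 * (dw x)^2 - E x / ?m)"
      using sq iE by (intro set_integral_diff(1) set_integral_add(1) set_integrable_mult_right
          set_integrable_divide)
    show "set_integrable lebesgue ?I (\<lambda>x. (\<alpha> + (1 - \<alpha>) * P x) * (dw x)^2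
        + (\<beta> + (\<gamma> - \<beta>) * P x) * (w x)^2 + \<kappa> * W x * (w x)^2
        - \<rho> x * ((q x - h x) * w x - (1 - \<alpha>) * du0 x * dw x - (\<gamma> - \<beta>) * u0 x * w x))"
      by (rule integrable_energy_identity)
    fix x
    have "E x = (\<rho> x)^2 * (q x - h x)^2 + (1 - \<alpha>)^2 * ((\<rho> x)^2 * (du0 x)^2)
        + (\<gamma> - \<beta>)^2 * ((\<rho> x)^2 * (u0 x)^2)"
      by (simp add: E_def algebra_simps)
    then show "?m / 2 * (w x)^2 + 3 * ?m / 4 * (dw x)^2 - E x / ?m
      \<le> (\<alpha> + (1 - \<alpha>) * P x) * (dw x)^2 + (\<beta> + (\<gamma> - \<beta>) * P x) * (w x)^2 + \<kappa> * W x * (w x)^2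
        - \<rho> x * ((q x - h x) * w x - (1 - \<alpha>) * du0 x * dw x - (\<gamma> - \<beta>) * u0 x * w x)"
      using coercive_pointwise_bound[OF m coercivity_const_le[OF phi_eps_bounds]
          mult_nonneg_nonneg[OF pos(4) interface_weight_bounds(1)[OF eps]]]
      by simp
  qed
  finally show ?thesis .
qed

lemma energy_estimate:
  assumes small: "a + sqrt \<epsilon> \<le> a1" "a1 + sqrt \<epsilon> \<le> (a1 + b1) / 2"
    "(a1 + b1) / 2 + sqrt \<epsilon> \<le> b1" "b1 + sqrt \<epsilon> \<le> b"
  shows "H1_norm_sq a b w dw \<le> 4 / coercivity_const * energy_bound \<epsilon>"
proof -
  let ?m = coercivity_const and ?N = "H1_norm_sq a b w dw"
    and ?Nw = "LINT x:{a<..<b}|lebesgue. (w x)^2" and ?Nd = "LINT x:{a<..<b}|lebesgue. (dw x)^2"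
    and ?B = "boundary_error \<epsilon>"
  have m: "?m > 0" by (rule coercivity_const_pos)
  have "?m / 2 * ?Nw + 3 * ?m / 4 * ?Nd - defect_energy \<epsilon> / ?m \<le> sqrt ?N * ?B"
    using coercive_lower_bound energy_identity abs_le_D1[OF boundary_term_estimate[OF small]]
    by linarith
  also have "\<dots> \<le> ?B^2 / ?m + ?m * ?N / 4"
    using young_mult_le[OF m, of ?B "sqrt ?N"] H1_norm_sq_nonneg by (simp add: mult.commute)
  finally have "?m / 4 * (?Nw + 2 * ?Nd) \<le> (defect_energy \<epsilon> + ?B^2) / ?m"
    by (simp add: H1_norm_sq_def add_divide_distrib algebra_simps)
  moreover have "?m / 4 * ?N \<le> ?m / 4 * (?Nw + 2 * ?Nd)"
    using m set_integral_square_nonneg[where f = dw] by (simp add: H1_norm_sq_def)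
  ultimately have "?m / 4 * ?N \<le> energy_bound \<epsilon>"
    by (simp add: energy_bound_def)
  then show ?thesis using m by (simp add: field_simps)
qed

end

end

theorem mainTheorem7:
  fixes a b a1 b1 \<alpha> \<beta> \<gamma> \<kappa> :: real
    and h q g u0 du0 :: "real \<Rightarrow> real"
    and u du :: "real \<Rightarrow> real \<Rightarrow> real"
  assumes ord: "a < a1" "a1 < b1" "b1 < b"
    and pos: "\<alpha> > 0" "\<beta> > 0" "\<gamma> > 0" "\<kappa> \<ge> 0"
    and hL2: "L2 a b h" and qL2: "L2 a b q"
    and gH1: "\<exists>dg. H1 a b g dg"
    and u0H1: "H1 a b u0 du0"
    and u0min: "\<And>v dv. H1 a b v dv \<Longrightarrow>
        E0 a b a1 b1 \<alpha> \<beta> \<gamma> \<kappa> h q g u0 du0 \<le> E0 a b a1 b1 \<alpha> \<beta> \<gamma> \<kappa> h q g v dv"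
    and uH1: "\<And>\<epsilon>. \<epsilon> \<in> {0<..<1} \<Longrightarrow> H1 a b (u \<epsilon>) (du \<epsilon>)"
    and uweak: "\<And>\<epsilon> v dv. \<epsilon> \<in> {0<..<1} \<Longrightarrow> H1 a b v dv \<Longrightarrow>
        (LINT x:{a<..<b}|lebesgue.
            (\<alpha> + (1 - \<alpha>) * phi_eps a1 b1 \<epsilon> x) * du \<epsilon> x * dv x
          + (\<beta> + (\<gamma> - \<beta>) * phi_eps a1 b1 \<epsilon> x) * u \<epsilon> x * v x
          + (\<kappa> * u \<epsilon> x + g x) * \<bar>deriv (phi_eps a1 b1 \<epsilon>) x\<bar> * v x)
        = (LINT x:{a<..<b}|lebesgue. (h x + (q x - h x) * phi_eps a1 b1 \<epsilon> x) * v x)"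
  shows "\<forall>e :: nat \<Rightarrow> real. (\<forall>k. e k \<in> {0<..<1}) \<and> decseq e \<and> e \<longlonglongrightarrow> 0 \<longrightarrow>
     (\<exists>r. strict_mono r \<and>
        (\<lambda>j. (LINT x:{a<..<b}|lebesgue. (u (e (r j)) x - u0 x)^2)
            + (LINT x:{a<..<b}|lebesgue. (du (e (r j)) x - du0 x)^2)) \<longlonglongrightarrow> 0)"
proof (intro allI impI)
  fix e :: "nat \<Rightarrow> real"
  assume "(\<forall>k. e k \<in> {0<..<1}) \<and> decseq e \<and> e \<longlonglongrightarrow> 0"
  then have e: "\<And>k. e k \<in> {0<..<1}" and e0: "e \<longlonglongrightarrow> 0" by auto
  obtain dg where "H1 a b g dg" using gH1 by blast
  then interpret sharp_interface_problem a b a1 b1 \<alpha> \<beta> \<gamma> \<kappa> h q g dg u0 du0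
    using ord pos hL2 qL2 u0H1 u0min by unfold_locales
  let ?N = "\<lambda>k. H1_norm_sq a b (\<lambda>x. u (e k) x - u0 x) (\<lambda>x. du (e k) x - du0 x)"
  have "(\<lambda>k. sqrt (e k)) \<longlonglongrightarrow> 0" using tendsto_real_sqrt[OF e0] by simp
  then have "\<forall>\<^sub>F k in sequentially. sqrt (e k) < min (min (a1 - a) ((b1 - a1) / 2)) (b - b1)"
    using ord by (intro order_tendstoD) auto
  then have bound: "\<forall>\<^sub>F k in sequentially. ?N k \<le> 4 / coercivity_const * energy_bound (e k)"
  proof eventually_elim
    case (elim k)
    show ?case
      using e[of k] elim by (intro energy_estimate[OF _ uH1 uweak]) (auto simp: field_simps)
  qed
  have "(\<lambda>k. 4 / coercivity_const * energy_bound (e k)) \<longlonglongrightarrow> 0"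
    using e by (intro tendsto_mult_right_zero energy_bound_tendsto_0[OF _ e0]) simp
  then have "?N \<longlonglongrightarrow> 0"
    using tendsto_sandwich[OF always_eventually[OF allI[OF H1_norm_sq_nonneg]] bound tendsto_const]
    by blast
  then show "\<exists>r. strict_mono r \<and>
      (\<lambda>j. (LINT x:{a<..<b}|lebesgue. (u (e (r j)) x - u0 x)^2)
        + (LINT x:{a<..<b}|lebesgue. (du (e (r j)) x - du0 x)^2)) \<longlonglongrightarrow> 0"
    by (intro exI[of _ id]) (simp add: strict_mono_def H1_norm_sq_def)
qed

end
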